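(* Let $(w,d,N,L)$ be a stable Levi–Schubert quadruple with $w\ne(1,\dots,d)$. Then $(w,d,N,L)$ is multiplicity free if and only if its reduction $(\overline w,\overline d,\overline N,\overline L)$ is multiplicity free.
   Context: Work over $\mathbb{C}$. $G_{d,N}$ is the Grassmannian of $d$-planes in $\mathbb{C}^N$ with its Plücker embedding; $B\subset GL_N$ the upper triangular matrices. $I_{d,N}$ is the set of sequences $(i_1<\dots<i_d)$ in $\{1,\dots,N\}$; for $w=(\ell_1,\dots,\ell_d)\in I_{d,N}$, $X(w)$ is the closure of $B\cdot[e_{\ell_1}\wedge\dots\wedge e_{\ell_d}]$ in $G_{d,N}$ and $\mathbb{C}[X(w)]$ its homogeneous coordinate ring for the Plücker embedding. A (standard) Levi subgroup $L$ of $GL_N$ is given by $0=j_0<j_1<\dots<j_{b_L}=N$: the invertible block diagonal matrices with blocks of sizes $N_k=j_k-j_{k-1}$. A Levi–Schubert quadruple $(w,d,N,L)$ consists of $1\le d<N$, $w\in I_{d,N}$ and such an $L$; it is stable if $X(w)$ is stable under left multiplication by $L$, and then multiplicity free if every irreducible $L$-module occurs with multiplicity at most one in $\mathbb{C}[X(w)]$. Reduction: let $p\ge0$ be maximal with $\ell_i=i$ for $i\le p$; the reduction is $(\overline w,\overline d,\overline N,\overline L)$ with $\overline w=(\ell_{p+1}-p,\dots,\ell_d-p)$, $\overline d=d-p$, $\overline N=\ell_d-p$, and $\overline L\subseteq GL_{\overline N}$ the image of $L$ under taking the principal submatrix on rows and columns $p+1,\dots,\ell_d$. *)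

theory Defs
  imports Complex_Main "HOL-Combinatorics.Permutations"
begin

text \<open>Matrices are functions nat => nat => complex, indices 0-based, zero outside
the relevant range. A "frame" is an N x d matrix whose columns span a d-plane
(or less); its Pluecker coordinates are its d x d maximal minors.\<close>

type_synonym cmat = "nat \<Rightarrow> nat \<Rightarrow> complex"

definition mmult :: "nat \<Rightarrow> cmat \<Rightarrow> cmat \<Rightarrow> cmat" where
  "mmult n X Y = (\<lambda>i k. \<Sum>j<n. X i j * Y j k)"

definition idm :: "nat \<Rightarrow> cmat" where
  "idm n = (\<lambda>i k. if i = k \<and> i < n then 1 else 0)"

definition supported :: "nat \<Rightarrow> nat \<Rightarrow> cmat \<Rightarrow> bool" where
  "supported m n A \<longleftrightarrow> (\<forall>i k. (m \<le> i \<or> n \<le> k) \<longrightarrow> A i k = 0)"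

definition invertible_mat :: "nat \<Rightarrow> cmat \<Rightarrow> bool" where
  "invertible_mat n g \<longleftrightarrow> supported n n g \<and>
     (\<exists>h. supported n n h \<and> mmult n g h = idm n \<and> mmult n h g = idm n)"

definition borel :: "nat \<Rightarrow> cmat set" where
  "borel n = {b. invertible_mat n b \<and> (\<forall>i j. j < i \<longrightarrow> b i j = 0)}"

text \<open>I_{d,N} with 1-based entries (as in the paper).\<close>
definition Iseq :: "nat \<Rightarrow> nat \<Rightarrow> nat list set" where
  "Iseq d N = {w. length w = d \<and> sorted_wrt (<) w \<and> (\<forall>x\<in>set w. 1 \<le> x \<and> x \<le> N)}"

definition pluecker :: "nat list \<Rightarrow> cmat \<Rightarrow> complex" where
  "pluecker I A = (\<Sum>\<sigma> | \<sigma> permutes {..<length I}.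
      of_int (sign \<sigma>) * (\<Prod>r<length I. A (I ! r - 1) (\<sigma> r)))"

definition poly_fun :: "nat \<Rightarrow> nat \<Rightarrow> (cmat \<Rightarrow> complex) \<Rightarrow> bool" where
  "poly_fun d N F \<longleftrightarrow> (\<exists>xs :: (complex \<times> nat list list) list.
      (\<forall>(c, Is)\<in>set xs. \<forall>I\<in>set Is. I \<in> Iseq d N) \<and>
      F = (\<lambda>A. \<Sum>(c, Is)\<leftarrow>xs. c * (\<Prod>I\<leftarrow>Is. pluecker I A)))"

text \<open>Frames of the points of the orbit B.[e_{l_1} ^ ... ^ e_{l_d}]:
 columns b e_{l_1}, ..., b e_{l_d} with b in B.\<close>
definition orbit_frames :: "nat list \<Rightarrow> nat \<Rightarrow> nat \<Rightarrow> cmat set" where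
  "orbit_frames w d N = {A. \<exists>b\<in>borel N.
      A = (\<lambda>i k. if i < N \<and> k < d then b i (w ! k - 1) else 0)}"

text \<open>Frames whose Pluecker point lies in the affine cone over X(w), the Zariski closure
 of the orbit: they satisfy every Pluecker polynomial vanishing on the orbit.\<close>
definition schubert_frames :: "nat list \<Rightarrow> nat \<Rightarrow> nat \<Rightarrow> cmat set" where
  "schubert_frames w d N = {A. supported N d A \<and>
      (\<forall>F. poly_fun d N F \<and> (\<forall>B\<in>orbit_frames w d N. F B = 0) \<longrightarrow> F A = 0)}"

definition coord_ring :: "nat list \<Rightarrow> nat \<Rightarrow> nat \<Rightarrow> (cmat \<Rightarrow> complex) set" where
  "coord_ring w d N = {(\<lambda>A. if A \<in> schubert_frames w d N then F A else 0) | F. poly_fun d N F}"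

definition act :: "nat list \<Rightarrow> nat \<Rightarrow> nat \<Rightarrow> cmat \<Rightarrow> (cmat \<Rightarrow> complex) \<Rightarrow> (cmat \<Rightarrow> complex)" where
  "act w d N g f = (\<lambda>A. if A \<in> schubert_frames w d N then f (mmult N g A) else 0)"

text \<open>Standard Levi subgroup given by 0 = j_0 < j_1 < ... < j_b = N; js = [j_1,...,j_b].\<close>
definition levi_data :: "nat \<Rightarrow> nat list \<Rightarrow> bool" where
  "levi_data N js \<longleftrightarrow> js \<noteq> [] \<and> sorted_wrt (<) js \<and> 0 < hd js \<and> last js = N"

definition block_of :: "nat list \<Rightarrow> nat \<Rightarrow> nat" where
  "block_of js i = length (filter (\<lambda>j. j \<le> i) js)"

definition levi :: "nat \<Rightarrow> nat list \<Rightarrow> cmat set" where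
  "levi N js = {g. invertible_mat N g \<and>
      (\<forall>i k. i < N \<longrightarrow> k < N \<longrightarrow> block_of js i \<noteq> block_of js k \<longrightarrow> g i k = 0)}"

definition ls_stable :: "nat list \<Rightarrow> nat \<Rightarrow> nat \<Rightarrow> cmat set \<Rightarrow> bool" where
  "ls_stable w d N G \<longleftrightarrow> (\<forall>g\<in>G. \<forall>A\<in>schubert_frames w d N. mmult N g A \<in> schubert_frames w d N)"

definition submodule :: "nat list \<Rightarrow> nat \<Rightarrow> nat \<Rightarrow> cmat set \<Rightarrow> (cmat \<Rightarrow> complex) set \<Rightarrow> bool" where
  "submodule w d N G U \<longleftrightarrow> U \<subseteq> coord_ring w d N \<and> (\<lambda>A. 0) \<in> U \<and>
     (\<forall>f\<in>U. \<forall>h\<in>U. (\<lambda>A. f A + h A) \<in> U) \<and>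
     (\<forall>c. \<forall>f\<in>U. (\<lambda>A. c * f A) \<in> U) \<and>
     (\<forall>g\<in>G. \<forall>f\<in>U. act w d N g f \<in> U)"

definition irreducible_submodule :: "nat list \<Rightarrow> nat \<Rightarrow> nat \<Rightarrow> cmat set \<Rightarrow> (cmat \<Rightarrow> complex) set \<Rightarrow> bool" where
  "irreducible_submodule w d N G U \<longleftrightarrow> submodule w d N G U \<and> U \<noteq> {\<lambda>A. 0} \<and>
     (\<forall>W. submodule w d N G W \<and> W \<subseteq> U \<longrightarrow> W = {\<lambda>A. 0} \<or> W = U)"

definition iso_submodules :: "nat list \<Rightarrow> nat \<Rightarrow> nat \<Rightarrow> cmat set \<Rightarrow> (cmat \<Rightarrow> complex) set \<Rightarrow> (cmat \<Rightarrow> complex) set \<Rightarrow> bool" where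
  "iso_submodules w d N G U1 U2 \<longleftrightarrow> (\<exists>\<phi>. bij_betw \<phi> U1 U2 \<and>
     (\<forall>f\<in>U1. \<forall>h\<in>U1. \<phi> (\<lambda>A. f A + h A) = (\<lambda>A. \<phi> f A + \<phi> h A)) \<and>
     (\<forall>c. \<forall>f\<in>U1. \<phi> (\<lambda>A. c * f A) = (\<lambda>A. c * \<phi> f A)) \<and>
     (\<forall>g\<in>G. \<forall>f\<in>U1. \<phi> (act w d N g f) = act w d N g (\<phi> f)))"

text \<open>Multiplicity free: no irreducible module occurs twice, i.e. two isomorphic
 irreducible submodules coincide.\<close>
definition mult_free :: "nat list \<Rightarrow> nat \<Rightarrow> nat \<Rightarrow> cmat set \<Rightarrow> bool" where
  "mult_free w d N G \<longleftrightarrow> (\<forall>U1 U2. irreducible_submodule w d N G U1 \<and>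
     irreducible_submodule w d N G U2 \<and> iso_submodules w d N G U1 U2 \<longrightarrow> U1 = U2)"

definition red_p :: "nat list \<Rightarrow> nat" where
  "red_p w = (GREATEST p. p \<le> length w \<and> (\<forall>i. 1 \<le> i \<and> i \<le> p \<longrightarrow> w ! (i - 1) = i))"

definition red_w :: "nat list \<Rightarrow> nat list" where
  "red_w w = map (\<lambda>l. l - red_p w) (drop (red_p w) w)"

definition red_d :: "nat list \<Rightarrow> nat" where
  "red_d w = length w - red_p w"

definition red_N :: "nat list \<Rightarrow> nat" where
  "red_N w = last w - red_p w"

definition principal_sub :: "nat \<Rightarrow> nat \<Rightarrow> cmat \<Rightarrow> cmat" where
  "principal_sub p n g = (\<lambda>i k. if i < n \<and> k < n then g (i + p) (k + p) else 0)"

definition red_L :: "nat list \<Rightarrow> cmat set \<Rightarrow> cmat set" where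
  "red_L w L = principal_sub (red_p w) (red_N w) ` L"

end

theory Submission
  imports Defs "Jordan_Normal_Form.Determinant"
begin

text \<open>
  The coordinate ring \<open>\<complex>[X(w)]\<close> is graded by degree in the Pluecker coordinates, and a scalar
  matrix \<open>t\<close> in \<open>L\<close> acts on degree \<open>n\<close> by \<open>t ^ (d * n)\<close>. Hence irreducible \<open>L\<close>-submodules are
  homogeneous and isomorphic ones live in the same degree, so multiplicity freeness can be tested
  degree by degree.

  Put \<open>l = \<ell>\<^sub>d\<close> and let \<open>w'\<close> be the reduction of \<open>w\<close>. If \<open>X(w)\<close> is \<open>L\<close>-stable, then \<open>L\<close>
  has block boundaries after \<open>p\<close> and after \<open>l\<close>: otherwise a transposition in \<open>L\<close> would move a point
  of the orbit to a point where some Pluecker coordinate vanishing on \<open>X(w)\<close> does not vanish.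
  A Pluecker coordinate \<open>p\<^sub>I\<close> can be nonzero on \<open>X(w)\<close> only if \<open>I = (1, \<dots>, p, J + p)\<close> with
  \<open>J \<in> I\<^sub>d\<^sub>',\<^sub>N\<^sub>'\<close>, and on the relevant frames such a \<open>p\<^sub>I\<close> factors as the top \<open>p \<times> p\<close> minor
  times \<open>p\<^sub>J\<close> of the middle block. Therefore \<open>p\<^sub>J \<mapsto> p\<^sub>I\<close> induces in each degree \<open>n\<close> a linear
  bijection \<open>\<complex>[X(w')]\<^sub>n \<rightarrow> \<complex>[X(w)]\<^sub>n\<close> that intertwines the two actions up to the character
  \<open>g \<mapsto> det(g\<^sub>t\<^sub>o\<^sub>p) ^ n\<close>. Twisting by a character preserves irreducibility and isomorphism,
  so multiplicity freeness passes in both directions.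
\<close>

section \<open>Multiplicity freeness of graded representations\<close>

definition submod :: "('a \<Rightarrow> complex) set \<Rightarrow> ('g \<Rightarrow> ('a \<Rightarrow> complex) \<Rightarrow> ('a \<Rightarrow> complex)) \<Rightarrow> 'g set \<Rightarrow>
    ('a \<Rightarrow> complex) set \<Rightarrow> bool" where
  "submod C ac G U \<longleftrightarrow> U \<subseteq> C \<and> (\<lambda>A. 0) \<in> U \<and>
     (\<forall>f\<in>U. \<forall>h\<in>U. (\<lambda>A. f A + h A) \<in> U) \<and>
     (\<forall>c. \<forall>f\<in>U. (\<lambda>A. c * f A) \<in> U) \<and>
     (\<forall>g\<in>G. \<forall>f\<in>U. ac g f \<in> U)"

definition irred_submod :: "('a \<Rightarrow> complex) set \<Rightarrow> ('g \<Rightarrow> ('a \<Rightarrow> complex) \<Rightarrow> ('a \<Rightarrow> complex)) \<Rightarrow> 'g set \<Rightarrow>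
    ('a \<Rightarrow> complex) set \<Rightarrow> bool" where
  "irred_submod C ac G U \<longleftrightarrow> submod C ac G U \<and> U \<noteq> {\<lambda>A. 0} \<and>
     (\<forall>W. submod C ac G W \<and> W \<subseteq> U \<longrightarrow> W = {\<lambda>A. 0} \<or> W = U)"

definition module_iso :: "('g \<Rightarrow> ('a \<Rightarrow> complex) \<Rightarrow> ('a \<Rightarrow> complex)) \<Rightarrow> 'g set \<Rightarrow>
    ('a \<Rightarrow> complex) set \<Rightarrow> ('a \<Rightarrow> complex) set \<Rightarrow> (('a \<Rightarrow> complex) \<Rightarrow> ('a \<Rightarrow> complex)) \<Rightarrow> bool" where
  "module_iso ac G U1 U2 \<phi> \<longleftrightarrow> bij_betw \<phi> U1 U2 \<and>
     (\<forall>f\<in>U1. \<forall>h\<in>U1. \<phi> (\<lambda>A. f A + h A) = (\<lambda>A. \<phi> f A + \<phi> h A)) \<and>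
     (\<forall>c. \<forall>f\<in>U1. \<phi> (\<lambda>A. c * f A) = (\<lambda>A. c * \<phi> f A)) \<and>
     (\<forall>g\<in>G. \<forall>f\<in>U1. \<phi> (ac g f) = ac g (\<phi> f))"

definition multiplicity_free :: "('a \<Rightarrow> complex) set \<Rightarrow> ('g \<Rightarrow> ('a \<Rightarrow> complex) \<Rightarrow> ('a \<Rightarrow> complex)) \<Rightarrow>
    'g set \<Rightarrow> bool" where
  "multiplicity_free C ac G \<longleftrightarrow> (\<forall>U1 U2. irred_submod C ac G U1 \<and> irred_submod C ac G U2 \<and>
     (\<exists>\<phi>. module_iso ac G U1 U2 \<phi>) \<longrightarrow> U1 = U2)"

lemma mult_free_iff_multiplicity_free:
  "mult_free w d N G \<longleftrightarrow> multiplicity_free (coord_ring w d N) (act w d N) G"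
  unfolding mult_free_def multiplicity_free_def irreducible_submodule_def irred_submod_def
    Defs.submodule_def submod_def iso_submodules_def module_iso_def by simp

lemma submodD:
  assumes "submod C ac G U"
  shows submod_subset: "U \<subseteq> C" and submod_zero: "(\<lambda>A. 0) \<in> U"
    and submod_add: "f \<in> U \<Longrightarrow> h \<in> U \<Longrightarrow> (\<lambda>A. f A + h A) \<in> U"
    and submod_smult: "f \<in> U \<Longrightarrow> (\<lambda>A. c * f A) \<in> U"
    and submod_act: "g \<in> G \<Longrightarrow> f \<in> U \<Longrightarrow> ac g f \<in> U"
  using assms unfolding submod_def by blast+

lemma submod_sum:
  assumes "submod C ac G U" "finite D" "\<forall>n\<in>D. fs n \<in> U"
  shows "(\<lambda>A. \<Sum>n\<in>D. fs n A) \<in> U"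
  using assms(2,3)
  by (induction D rule: finite_induct) (auto intro: submod_zero[OF assms(1)] submod_add[OF assms(1)])

lemma bij_betw_conj_iff:
  assumes inj: "inj_on T V" and U: "U1 \<subseteq> V" "U2 \<subseteq> V" and \<psi>: "\<psi> ` U1 \<subseteq> U2"
    and conj: "\<And>h. h \<in> U1 \<Longrightarrow> \<phi> (T h) = T (\<psi> h)"
  shows "bij_betw \<psi> U1 U2 \<longleftrightarrow> bij_betw \<phi> (T ` U1) (T ` U2)"
proof -
  have "bij_betw \<phi> (T ` U1) (T ` U2) \<longleftrightarrow> bij_betw (\<phi> \<circ> T) U1 (T ` U2)"
    using inj_on_imp_bij_betw[OF inj_on_subset[OF inj U(1)]] by (rule bij_betw_comp_iff)
  also have "\<dots> \<longleftrightarrow> bij_betw (T \<circ> \<psi>) U1 (T ` U2)" by (rule bij_betw_cong) (simp add: conj)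
  also have "\<dots> \<longleftrightarrow> bij_betw \<psi> U1 U2"
    using bij_betw_comp_iff2[OF inj_on_imp_bij_betw[OF inj_on_subset[OF inj U(2)]] \<psi>] by simp
  finally show ?thesis ..
qed

locale graded_rep =
  fixes C :: "('a \<Rightarrow> complex) set" and ac :: "'g \<Rightarrow> ('a \<Rightarrow> complex) \<Rightarrow> ('a \<Rightarrow> complex)"
    and G :: "'g set" and V :: "nat \<Rightarrow> ('a \<Rightarrow> complex) set" and sc :: "complex \<Rightarrow> 'g" and e :: nat
  assumes V_submod: "submod C ac G (V n)"
    and decomp: "f \<in> C \<Longrightarrow> \<exists>M fs. (\<forall>n<M. fs n \<in> V n) \<and> f = (\<lambda>A. \<Sum>n<M. fs n A)"
    and sc_in: "t \<noteq> 0 \<Longrightarrow> sc t \<in> G"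
    and sc_act: "t \<noteq> 0 \<Longrightarrow> f \<in> V n \<Longrightarrow> ac (sc t) f = (\<lambda>A. t ^ (e * n) * f A)"
    and ac_add: "ac g (\<lambda>A. f A + h A) = (\<lambda>A. ac g f A + ac g h A)"
    and ac_smult: "ac g (\<lambda>A. c * f A) = (\<lambda>A. c * ac g f A)"
    and e_pos: "0 < e"
begin

lemmas V_sub = submod_subset[OF V_submod] and V_zero = submod_zero[OF V_submod]
  and V_add = submod_add[OF V_submod] and V_smult = submod_smult[OF V_submod]
  and V_act = submod_act[OF V_submod]

lemma ac_sum: "finite D \<Longrightarrow> ac g (\<lambda>A. \<Sum>n\<in>D. fs n A) = (\<lambda>A. \<Sum>n\<in>D. ac g (fs n) A)"
proof (induction D rule: finite_induct)
  case empty then show ?case using ac_smult[of g 0 "\<lambda>A. 0"] by simp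
next
  case (insert x F)
  then show ?case using ac_add[of g "fs x" "\<lambda>A. \<Sum>n\<in>F. fs n A"] by simp
qed

lemma two_power_inj: "m \<noteq> n \<Longrightarrow> (2::complex) ^ (e * m) \<noteq> 2 ^ (e * n)"
proof
  assume "m \<noteq> n" "(2::complex) ^ (e * m) = 2 ^ (e * n)"
  then have "(2::nat) ^ (e * m) = 2 ^ (e * n)"
    by (metis of_nat_eq_iff of_nat_numeral of_nat_power)
  with e_pos \<open>m \<noteq> n\<close> show False by simp
qed

text \<open>Acting by the scalar 2 and subtracting \<open>2 ^ (e * x)\<close> times the original vector kills the
  component of weight \<open>x\<close>; this is the Vandermonde argument behind homogeneity of submodules.\<close>

lemma submod_weight_shift:
  assumes U: "submod C ac G U" and D: "finite D" "\<forall>n\<in>D. fs n \<in> V n"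
    and h: "(\<lambda>A. \<Sum>n\<in>D. c n * fs n A) \<in> U"
  shows "(\<lambda>A. \<Sum>n\<in>D. c n * (2 ^ (e * n) - 2 ^ (e * x)) * fs n A) \<in> U"
proof -
  let ?h = "\<lambda>A. \<Sum>n\<in>D. c n * fs n A"
  have "ac (sc 2) ?h = (\<lambda>A. \<Sum>n\<in>D. c n * ac (sc 2) (fs n) A)"
    using D by (simp add: ac_sum ac_smult)
  also have "\<dots> = (\<lambda>A. \<Sum>n\<in>D. 2 ^ (e * n) * (c n * fs n A))"
    using D(2) sc_act[of 2] by (intro ext sum.cong) auto
  finally have "ac (sc 2) ?h = (\<lambda>A. \<Sum>n\<in>D. 2 ^ (e * n) * (c n * fs n A))" .
  moreover have "(\<lambda>A. ac (sc 2) ?h A + (- (2 ^ (e * x))) * ?h A) \<in> U"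
    using submod_add[OF U submod_act[OF U sc_in[of 2] h] submod_smult[OF U h, of "- (2 ^ (e * x))"]] by simp
  ultimately show ?thesis
    by (simp add: sum_distrib_left sum.distrib[symmetric] algebra_simps)
qed

lemma homogeneous_part_in_submod:
  assumes U: "submod C ac G U" and "finite D" "\<forall>n\<in>D. fs n \<in> V n"
  shows "(\<lambda>A. \<Sum>n\<in>D. c n * fs n A) \<in> U \<Longrightarrow> m \<in> D \<Longrightarrow> (\<lambda>A. c m * fs m A) \<in> U"
  using assms(2,3)
proof (induction D arbitrary: c m rule: finite_induct)
  case empty then show ?case by simp
next
  case (insert x F)
  define c' where "c' n = c n * (2 ^ (e * n) - 2 ^ (e * x))" for n
  have "(\<lambda>A. \<Sum>n\<in>insert x F. c' n * fs n A) \<in> U"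
    using submod_weight_shift[OF U _ insert.prems(3,1), where x = x] insert.hyps by (simp add: c'_def)
  then have "(\<lambda>A. \<Sum>n\<in>F. c' n * fs n A) \<in> U" using insert.hyps by (simp add: c'_def)
  then have c'F: "(\<lambda>A. c' m' * fs m' A) \<in> U" if "m' \<in> F" for m'
    using insert.IH insert.prems that by blast
  have cF: "(\<lambda>A. c m' * fs m' A) \<in> U" if m': "m' \<in> F" for m'
  proof -
    let ?k = "(2::complex) ^ (e * m') - 2 ^ (e * x)"
    have "?k \<noteq> 0" using two_power_inj[of m' x] insert.hyps m' by auto
    then have "(\<lambda>A. inverse ?k * (c' m' * fs m' A)) = (\<lambda>A. c m' * fs m' A)"
      by (auto simp: c'_def)
    then show ?thesis using submod_smult[OF U c'F[OF m'], of "inverse ?k"] by simp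
  qed
  show ?case
  proof (cases "m = x")
    case True
    have "(\<lambda>A. \<Sum>n\<in>F. c n * fs n A) \<in> U"
      using submod_sum[OF U insert.hyps(1), of "\<lambda>n A. c n * fs n A"] cF by auto
    then have "(\<lambda>A. (\<Sum>n\<in>insert x F. c n * fs n A) + (-1) * (\<Sum>n\<in>F. c n * fs n A)) \<in> U"
      using submod_add[OF U insert.prems(1) submod_smult[OF U]] by blast
    then show ?thesis using True insert.hyps by simp
  qed (use cF insert.prems in auto)
qed

lemma irred_submod_homogeneous:
  assumes "irred_submod C ac G U" shows "\<exists>n. U \<subseteq> V n"
proof -
  have U: "submod C ac G U" and ne: "U \<noteq> {\<lambda>A. 0}"
    and minimal: "\<And>W. submod C ac G W \<Longrightarrow> W \<subseteq> U \<Longrightarrow> W = {\<lambda>A. 0} \<or> W = U"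
    using assms unfolding irred_submod_def by auto
  obtain f where f: "f \<in> U" "f \<noteq> (\<lambda>A. 0)" using ne submod_zero[OF U] by blast
  obtain M fs where fs: "\<forall>n<M. fs n \<in> V n" "f = (\<lambda>A. \<Sum>n<M. fs n A)"
    using decomp submod_subset[OF U] f(1) by blast
  obtain m where m: "m < M" "fs m \<noteq> (\<lambda>A. 0)"
    using fs(2) f(2) by (metis (no_types, lifting) sum.neutral lessThan_iff)
  have "fs m \<in> U"
    using homogeneous_part_in_submod[OF U, of "{..<M}" fs "\<lambda>_. 1"] fs f m by auto
  then have "U \<inter> V m \<noteq> {\<lambda>A. 0}" using fs(1) m by auto
  moreover have "submod C ac G (U \<inter> V m)" using U V_submod unfolding submod_def by auto
  ultimately have "U \<inter> V m = U" using minimal by auto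
  then show ?thesis by blast
qed

lemma module_iso_same_degree:
  assumes U1: "U1 \<subseteq> V m" "U1 \<noteq> {}" and U2: "U2 \<subseteq> V n" "U2 \<noteq> {\<lambda>A. 0}"
    and iso: "module_iso ac G U1 U2 \<phi>"
  shows "m = n"
proof (rule ccontr)
  assume mn: "m \<noteq> n"
  have "\<phi> f = (\<lambda>A. 0)" if f: "f \<in> U1" for f
  proof -
    have \<phi>f: "\<phi> f \<in> U2" using iso f by (auto simp: module_iso_def bij_betw_def)
    have "(\<lambda>A. 2 ^ (e * m) * \<phi> f A) = \<phi> (ac (sc 2) f)"
      using iso f U1 sc_act[of 2 f m] by (auto simp: module_iso_def)
    also have "\<dots> = (\<lambda>A. 2 ^ (e * n) * \<phi> f A)"
      using iso f sc_in[of 2] sc_act[of 2 "\<phi> f" n] \<phi>f U2 by (auto simp: module_iso_def)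
    finally show ?thesis using two_power_inj[OF mn] by (metis mult_cancel_right)
  qed
  then have "U2 = {\<lambda>A. 0}"
    using iso U1(2) by (auto simp: module_iso_def bij_betw_def)
  with U2 show False by simp
qed

end

locale graded_transfer = S1: graded_rep C1 ac1 G1 V1 sc1 e1 + S2: graded_rep C2 ac2 G2 V2 sc2 e2
  for C1 ac1 G1 V1 sc1 e1 C2 ac2 G2 V2 sc2 e2 +
  fixes \<pi> :: "'g \<Rightarrow> 'h" and \<chi> :: "'g \<Rightarrow> complex" and T :: "nat \<Rightarrow> ('b \<Rightarrow> complex) \<Rightarrow> ('a \<Rightarrow> complex)"
  assumes G2_eq: "G2 = \<pi> ` G1"
    and chi_nonzero: "g \<in> G1 \<Longrightarrow> \<chi> g \<noteq> 0"
    and T_bij: "bij_betw (T n) (V2 n) (V1 n)"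
    and T_add: "f \<in> V2 n \<Longrightarrow> h \<in> V2 n \<Longrightarrow> T n (\<lambda>A. f A + h A) = (\<lambda>A. T n f A + T n h A)"
    and T_smult: "f \<in> V2 n \<Longrightarrow> T n (\<lambda>A. c * f A) = (\<lambda>A. c * T n f A)"
    and T_act: "g \<in> G1 \<Longrightarrow> f \<in> V2 n \<Longrightarrow> ac1 g (T n f) = (\<lambda>A. \<chi> g ^ n * T n (ac2 (\<pi> g) f) A)"
begin

lemma T_in: "f \<in> V2 n \<Longrightarrow> T n f \<in> V1 n"
  using T_bij by (auto simp: bij_betw_def)

lemma T_eq_iff: "f \<in> V2 n \<Longrightarrow> h \<in> V2 n \<Longrightarrow> T n f = T n h \<longleftrightarrow> f = h"
  using T_bij by (auto simp: bij_betw_def inj_on_def)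

lemma T_zero: "T n (\<lambda>A. 0) = (\<lambda>A. 0)"
  using T_smult[OF S2.V_zero, of n 0] by simp

lemma T_act_twisted: "g \<in> G1 \<Longrightarrow> f \<in> V2 n \<Longrightarrow> ac1 g (T n f) = T n (\<lambda>A. \<chi> g ^ n * ac2 (\<pi> g) f A)"
  using T_act T_smult S2.V_act G2_eq by auto

definition T_inv :: "nat \<Rightarrow> ('a \<Rightarrow> complex) \<Rightarrow> ('b \<Rightarrow> complex)" where
  "T_inv n = inv_into (V2 n) (T n)"

lemma T_inv_T: "h \<in> V2 n \<Longrightarrow> T_inv n (T n h) = h"
  unfolding T_inv_def using T_bij by (simp add: bij_betw_def inv_into_f_f)

lemma T_T_inv: "f \<in> V1 n \<Longrightarrow> T n (T_inv n f) = f"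
  unfolding T_inv_def using T_bij by (simp add: bij_betw_def f_inv_into_f)

lemma T_inv_in: "f \<in> V1 n \<Longrightarrow> T_inv n f \<in> V2 n"
  unfolding T_inv_def using T_bij by (simp add: bij_betw_def inv_into_into)

lemma submod_image:
  assumes U: "U \<subseteq> V2 n" "submod C2 ac2 G2 U"
  shows "submod C1 ac1 G1 (T n ` U)"
  unfolding submod_def
proof (intro conjI ballI allI)
  show "T n ` U \<subseteq> C1" using U T_in S1.V_sub by blast
  show "(\<lambda>A. 0) \<in> T n ` U" using submod_zero[OF U(2)] T_zero by (metis image_eqI)
next
  fix f h assume "f \<in> T n ` U" "h \<in> T n ` U"
  then obtain f' h' where fh: "f' \<in> U" "h' \<in> U" "f = T n f'" "h = T n h'" by blast
  then have "f' \<in> V2 n" "h' \<in> V2 n" using U(1) by auto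
  then have "(\<lambda>A. f A + h A) = T n (\<lambda>A. f' A + h' A)" using T_add fh by simp
  then show "(\<lambda>A. f A + h A) \<in> T n ` U" using submod_add[OF U(2) fh(1,2)] by simp
next
  fix c f assume "f \<in> T n ` U"
  then obtain f' where f': "f' \<in> U" "f = T n f'" by blast
  then have "(\<lambda>A. c * f A) = T n (\<lambda>A. c * f' A)" using T_smult[of f' n c] U(1) by auto
  then show "(\<lambda>A. c * f A) \<in> T n ` U" using submod_smult[OF U(2) f'(1)] by simp
next
  fix g f assume g: "g \<in> G1" and "f \<in> T n ` U"
  then obtain f' where f': "f' \<in> U" "f = T n f'" by blast
  have "(\<lambda>A. \<chi> g ^ n * ac2 (\<pi> g) f' A) \<in> U"
    using submod_smult[OF U(2) submod_act[OF U(2)]] G2_eq g f' by blast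
  then show "ac1 g f \<in> T n ` U" using T_act_twisted[OF g] f' U(1) by blast
qed

lemma submod_from_image:
  assumes U: "U \<subseteq> V2 n" "submod C1 ac1 G1 (T n ` U)"
  shows "submod C2 ac2 G2 U"
proof -
  have from_image: "f \<in> U" if "f \<in> V2 n" "T n f \<in> T n ` U" for f
    using that U(1) T_eq_iff by blast
  show ?thesis
    unfolding submod_def
  proof (intro conjI ballI allI)
    show "U \<subseteq> C2" using U S2.V_sub by blast
    show "(\<lambda>A. 0) \<in> U" using from_image[OF S2.V_zero] submod_zero[OF U(2)] T_zero by simp
  next
    fix f h assume fh: "f \<in> U" "h \<in> U"
    then have V: "f \<in> V2 n" "h \<in> V2 n" using U(1) by auto
    have "T n (\<lambda>A. f A + h A) \<in> T n ` U"
      using T_add[OF V] submod_add[OF U(2), of "T n f" "T n h"] fh by simp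
    then show "(\<lambda>A. f A + h A) \<in> U" using from_image[OF S2.V_add[OF V]] by blast
  next
    fix c f assume f: "f \<in> U"
    then have V: "f \<in> V2 n" using U(1) by auto
    have "T n (\<lambda>A. c * f A) \<in> T n ` U"
      using T_smult[OF V] submod_smult[OF U(2), of "T n f"] f by simp
    then show "(\<lambda>A. c * f A) \<in> U" using from_image[OF S2.V_smult[OF V]] by blast
  next
    fix g2 f assume g2: "g2 \<in> G2" and f: "f \<in> U"
    then obtain g where g: "g \<in> G1" "g2 = \<pi> g" using G2_eq by blast
    have fV: "f \<in> V2 n" using f U(1) by blast
    have "T n (ac2 g2 f) = (\<lambda>A. inverse (\<chi> g ^ n) * ac1 g (T n f) A)"
      using T_act[OF g(1) fV] chi_nonzero[OF g(1)] g(2) by (simp add: field_simps)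
    also have "\<dots> \<in> T n ` U" using submod_smult[OF U(2) submod_act[OF U(2) g(1)]] f by blast
    finally show "ac2 g2 f \<in> U" using from_image S2.V_act[OF g2 fV] by blast
  qed
qed

lemma image_eq_zero_iff:
  assumes "U \<subseteq> V2 n" "(\<lambda>A. 0) \<in> U"
  shows "T n ` U = {\<lambda>A. 0} \<longleftrightarrow> U = {\<lambda>A. 0}"
proof
  assume "T n ` U = {\<lambda>A. 0}"
  then have "T n f = T n (\<lambda>A. 0)" if "f \<in> U" for f using that T_zero by auto
  then show "U = {\<lambda>A. 0}" using assms T_eq_iff[OF _ S2.V_zero] by blast
qed (simp add: T_zero)

lemma irred_submod_image_iff:
  assumes U: "U \<subseteq> V2 n"
  shows "irred_submod C2 ac2 G2 U \<longleftrightarrow> irred_submod C1 ac1 G1 (T n ` U)"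
proof
  assume H: "irred_submod C2 ac2 G2 U"
  then have s: "submod C2 ac2 G2 U" by (simp add: irred_submod_def)
  show "irred_submod C1 ac1 G1 (T n ` U)"
    unfolding irred_submod_def
  proof (intro conjI allI impI)
    show "submod C1 ac1 G1 (T n ` U)" using submod_image[OF U s] .
    show "T n ` U \<noteq> {\<lambda>A. 0}"
      using H image_eq_zero_iff[OF U submod_zero[OF s]] by (simp add: irred_submod_def)
  next
    fix W assume W: "submod C1 ac1 G1 W \<and> W \<subseteq> T n ` U"
    then obtain W' where W': "W' \<subseteq> U" "W = T n ` W'" by (auto simp: subset_image_iff)
    then have "submod C2 ac2 G2 W'" using submod_from_image W U by blast
    then have "W' = {\<lambda>A. 0} \<or> W' = U" using H W' by (simp add: irred_submod_def)
    then show "W = {\<lambda>A. 0} \<or> W = T n ` U" using W' T_zero by auto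
  qed
next
  assume H: "irred_submod C1 ac1 G1 (T n ` U)"
  then have s: "submod C2 ac2 G2 U" using submod_from_image[OF U] by (simp add: irred_submod_def)
  show "irred_submod C2 ac2 G2 U"
    unfolding irred_submod_def
  proof (intro conjI allI impI)
    show "submod C2 ac2 G2 U" by (rule s)
    show "U \<noteq> {\<lambda>A. 0}"
      using H image_eq_zero_iff[OF U submod_zero[OF s]] by (simp add: irred_submod_def)
  next
    fix W assume W: "submod C2 ac2 G2 W \<and> W \<subseteq> U"
    then have WV: "W \<subseteq> V2 n" using U by blast
    have "T n ` W = {\<lambda>A. 0} \<or> T n ` W = T n ` U"
      using H W submod_image[OF WV] image_mono[of W U "T n"] by (simp add: irred_submod_def)
    moreover have "inj_on (T n) (V2 n)" using T_bij by (simp add: bij_betw_def)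
    ultimately show "W = {\<lambda>A. 0} \<or> W = U"
      using image_eq_zero_iff[OF WV submod_zero] inj_on_image_eq_iff[of "T n" "V2 n" W U] W WV U
      by blast
  qed
qed

lemma conj_act_iff:
  assumes U: "U1 \<subseteq> V2 n" "U2 \<subseteq> V2 n" "submod C2 ac2 G2 U1"
    and \<psi>: "\<psi> ` U1 \<subseteq> U2" and conj: "\<And>h. h \<in> U1 \<Longrightarrow> \<phi> (T n h) = T n (\<psi> h)"
    and hom: "\<forall>c. \<forall>f\<in>U1. \<psi> (\<lambda>A. c * f A) = (\<lambda>A. c * \<psi> f A)" and g: "g \<in> G1" and f: "f \<in> U1"
  shows "\<psi> (ac2 (\<pi> g) f) = ac2 (\<pi> g) (\<psi> f) \<longleftrightarrow> \<phi> (ac1 g (T n f)) = ac1 g (\<phi> (T n f))"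
proof -
  have \<psi>V: "\<psi> h \<in> V2 n" if "h \<in> U1" for h using \<psi> U(2) that by blast
  have UV: "f \<in> V2 n" using U(1) f by blast
  have \<pi>g: "\<pi> g \<in> G2" using G2_eq g by blast
  have gf: "ac2 (\<pi> g) f \<in> U1" using submod_act[OF U(3) \<pi>g f] .
  have "\<phi> (ac1 g (T n f)) = T n (\<lambda>A. \<chi> g ^ n * \<psi> (ac2 (\<pi> g) f) A)"
    using T_act_twisted[OF g UV] conj[OF submod_smult[OF U(3) gf]] hom gf by simp
  moreover have "ac1 g (\<phi> (T n f)) = T n (\<lambda>A. \<chi> g ^ n * ac2 (\<pi> g) (\<psi> f) A)"
    using T_act_twisted[OF g \<psi>V[OF f]] conj[OF f] by simp
  moreover have "(\<lambda>A. \<chi> g ^ n * \<psi> (ac2 (\<pi> g) f) A) = (\<lambda>A. \<chi> g ^ n * ac2 (\<pi> g) (\<psi> f) A)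
      \<longleftrightarrow> \<psi> (ac2 (\<pi> g) f) = ac2 (\<pi> g) (\<psi> f)"
    using chi_nonzero[OF g] by (auto simp: fun_eq_iff)
  moreover have "(\<lambda>A. \<chi> g ^ n * \<psi> (ac2 (\<pi> g) f) A) \<in> V2 n"
    "(\<lambda>A. \<chi> g ^ n * ac2 (\<pi> g) (\<psi> f) A) \<in> V2 n"
    using S2.V_smult \<psi>V[OF gf] S2.V_act[OF \<pi>g \<psi>V[OF f]] by auto
  ultimately show ?thesis using T_eq_iff by simp
qed

lemma module_iso_conj_iff:
  assumes U: "U1 \<subseteq> V2 n" "U2 \<subseteq> V2 n" "submod C2 ac2 G2 U1"
    and \<psi>: "\<psi> ` U1 \<subseteq> U2" and conj: "\<And>h. h \<in> U1 \<Longrightarrow> \<phi> (T n h) = T n (\<psi> h)"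
  shows "module_iso ac2 G2 U1 U2 \<psi> \<longleftrightarrow> module_iso ac1 G1 (T n ` U1) (T n ` U2) \<phi>"
proof -
  have inj: "inj_on (T n) (V2 n)" using T_bij by (simp add: bij_betw_def)
  have \<psi>V: "\<psi> h \<in> V2 n" if "h \<in> U1" for h using \<psi> U(2) that by blast
  have UV: "h \<in> V2 n" if "h \<in> U1" for h using U(1) that by blast
  have bij: "bij_betw \<psi> U1 U2 \<longleftrightarrow> bij_betw \<phi> (T n ` U1) (T n ` U2)"
    using bij_betw_conj_iff[OF inj U(1,2) \<psi>] conj by blast
  have add: "\<psi> (\<lambda>A. f A + h A) = (\<lambda>A. \<psi> f A + \<psi> h A) \<longleftrightarrow>
      \<phi> (\<lambda>A. T n f A + T n h A) = (\<lambda>A. \<phi> (T n f) A + \<phi> (T n h) A)" if fh: "f \<in> U1" "h \<in> U1" for f h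
  proof -
    have fh': "(\<lambda>A. f A + h A) \<in> U1" using submod_add[OF U(3) fh] .
    have "\<phi> (\<lambda>A. T n f A + T n h A) = T n (\<psi> (\<lambda>A. f A + h A))"
      using T_add[OF UV UV] conj[OF fh'] fh by simp
    moreover have "(\<lambda>A. \<phi> (T n f) A + \<phi> (T n h) A) = T n (\<lambda>A. \<psi> f A + \<psi> h A)"
      using T_add[OF \<psi>V \<psi>V] conj fh by simp
    ultimately show ?thesis using T_eq_iff[OF \<psi>V[OF fh'] S2.V_add[OF \<psi>V \<psi>V]] fh by simp
  qed
  have smult: "\<psi> (\<lambda>A. c * f A) = (\<lambda>A. c * \<psi> f A) \<longleftrightarrow>
      \<phi> (\<lambda>A. c * T n f A) = (\<lambda>A. c * \<phi> (T n f) A)" if f: "f \<in> U1" for c f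
  proof -
    have f': "(\<lambda>A. c * f A) \<in> U1" using submod_smult[OF U(3) f] .
    have "\<phi> (\<lambda>A. c * T n f A) = T n (\<psi> (\<lambda>A. c * f A))"
      using T_smult[OF UV] conj[OF f'] f by simp
    moreover have "(\<lambda>A. c * \<phi> (T n f) A) = T n (\<lambda>A. c * \<psi> f A)"
      using T_smult[OF \<psi>V] conj f by simp
    ultimately show ?thesis using T_eq_iff[OF \<psi>V[OF f'] S2.V_smult[OF \<psi>V]] f by simp
  qed
  have "bij_betw \<psi> U1 U2 \<longleftrightarrow> bij_betw \<phi> (T n ` U1) (T n ` U2)"
    and "(\<forall>f\<in>U1. \<forall>h\<in>U1. \<psi> (\<lambda>A. f A + h A) = (\<lambda>A. \<psi> f A + \<psi> h A)) \<longleftrightarrow>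
      (\<forall>f\<in>T n ` U1. \<forall>h\<in>T n ` U1. \<phi> (\<lambda>A. f A + h A) = (\<lambda>A. \<phi> f A + \<phi> h A))"
    and hom: "(\<forall>c. \<forall>f\<in>U1. \<psi> (\<lambda>A. c * f A) = (\<lambda>A. c * \<psi> f A)) \<longleftrightarrow>
      (\<forall>c. \<forall>f\<in>T n ` U1. \<phi> (\<lambda>A. c * f A) = (\<lambda>A. c * \<phi> f A))"
    using bij add smult unfolding ball_simps(9) by blast+
  moreover have "(\<forall>g\<in>G2. \<forall>f\<in>U1. \<psi> (ac2 g f) = ac2 g (\<psi> f)) \<longleftrightarrow>
      (\<forall>g\<in>G1. \<forall>f\<in>T n ` U1. \<phi> (ac1 g f) = ac1 g (\<phi> f))"
    if "\<forall>c. \<forall>f\<in>U1. \<psi> (\<lambda>A. c * f A) = (\<lambda>A. c * \<psi> f A)"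
    using conj_act_iff[OF U \<psi> conj that] unfolding G2_eq ball_simps(9) by blast
  ultimately show ?thesis unfolding module_iso_def by blast
qed

lemma ex_module_iso_image_iff:
  assumes U: "U1 \<subseteq> V2 n" "U2 \<subseteq> V2 n" "submod C2 ac2 G2 U1"
  shows "(\<exists>\<psi>. module_iso ac2 G2 U1 U2 \<psi>) \<longleftrightarrow> (\<exists>\<phi>. module_iso ac1 G1 (T n ` U1) (T n ` U2) \<phi>)"
proof
  assume "\<exists>\<psi>. module_iso ac2 G2 U1 U2 \<psi>"
  then obtain \<psi> where iso: "module_iso ac2 G2 U1 U2 \<psi>" ..
  then have \<psi>: "\<psi> ` U1 \<subseteq> U2" by (simp add: module_iso_def bij_betw_def)
  define \<phi> where "\<phi> f = T n (\<psi> (T_inv n f))" for f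
  have conj: "\<phi> (T n h) = T n (\<psi> h)" if "h \<in> U1" for h
    unfolding \<phi>_def using T_inv_T that U(1) by auto
  have "module_iso ac1 G1 (T n ` U1) (T n ` U2) \<phi>" using module_iso_conj_iff[OF U \<psi> conj] iso by simp
  then show "\<exists>\<phi>. module_iso ac1 G1 (T n ` U1) (T n ` U2) \<phi>" by blast
next
  assume "\<exists>\<phi>. module_iso ac1 G1 (T n ` U1) (T n ` U2) \<phi>"
  then obtain \<phi> where iso: "module_iso ac1 G1 (T n ` U1) (T n ` U2) \<phi>" ..
  define \<psi> where "\<psi> h = T_inv n (\<phi> (T n h))" for h
  have \<phi>: "\<phi> (T n h) \<in> T n ` U2" if "h \<in> U1" for h
    using iso that by (auto simp: module_iso_def bij_betw_def)
  then have \<psi>: "\<psi> ` U1 \<subseteq> U2" using T_inv_T U(2) unfolding \<psi>_def by fastforce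
  have conj: "\<phi> (T n h) = T n (\<psi> h)" if "h \<in> U1" for h
    using \<phi>[OF that] T_inv_T U(2) unfolding \<psi>_def by fastforce
  have "module_iso ac2 G2 U1 U2 \<psi>" using module_iso_conj_iff[OF U \<psi> conj] iso by simp
  then show "\<exists>\<psi>. module_iso ac2 G2 U1 U2 \<psi>" by blast
qed

lemma equal_if_iso_irred_submods:
  assumes mf: "multiplicity_free C1 ac1 G1" and U: "U1 \<subseteq> V2 n" "U2 \<subseteq> V2 n"
    and irr: "irred_submod C2 ac2 G2 U1" "irred_submod C2 ac2 G2 U2"
    and iso: "\<exists>\<psi>. module_iso ac2 G2 U1 U2 \<psi>"
  shows "U1 = U2"
proof -
  have "irred_submod C1 ac1 G1 (T n ` U1)" "irred_submod C1 ac1 G1 (T n ` U2)"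
    using irr irred_submod_image_iff U by blast+
  moreover have "\<exists>\<phi>. module_iso ac1 G1 (T n ` U1) (T n ` U2) \<phi>"
    using iso ex_module_iso_image_iff[OF U] irr(1) by (simp add: irred_submod_def)
  ultimately have "T n ` U1 = T n ` U2" using mf unfolding multiplicity_free_def by blast
  moreover have "inj_on (T n) (V2 n)" using T_bij by (simp add: bij_betw_def)
  ultimately show "U1 = U2" using inj_on_image_eq_iff U by blast
qed

lemma (in graded_rep) irred_submods_same_degree:
  assumes irr: "irred_submod C ac G U1" "irred_submod C ac G U2"
    and iso: "\<exists>\<phi>. module_iso ac G U1 U2 \<phi>"
  obtains n where "U1 \<subseteq> V n" "U2 \<subseteq> V n"
proof -
  obtain m m' where m: "U1 \<subseteq> V m" and m': "U2 \<subseteq> V m'"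
    using irred_submod_homogeneous irr by metis
  have "U1 \<noteq> {}" using submod_zero irr(1) by (auto simp: irred_submod_def)
  then have "m = m'"
    using module_iso_same_degree[OF m _ m'] irr(2) iso by (auto simp: irred_submod_def)
  then show thesis using that m m' by blast
qed

theorem multiplicity_free_iff: "multiplicity_free C1 ac1 G1 \<longleftrightarrow> multiplicity_free C2 ac2 G2"
proof
  assume mf: "multiplicity_free C1 ac1 G1"
  show "multiplicity_free C2 ac2 G2" unfolding multiplicity_free_def
  proof (intro allI impI, elim conjE)
    fix U1 U2 assume "irred_submod C2 ac2 G2 U1" "irred_submod C2 ac2 G2 U2"
      "\<exists>\<psi>. module_iso ac2 G2 U1 U2 \<psi>"
    then show "U1 = U2"
      by (metis S2.irred_submods_same_degree equal_if_iso_irred_submods[OF mf])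
  qed
next
  assume mf: "multiplicity_free C2 ac2 G2"
  show "multiplicity_free C1 ac1 G1" unfolding multiplicity_free_def
  proof (intro allI impI, elim conjE)
    fix U1 U2 assume irr: "irred_submod C1 ac1 G1 U1" "irred_submod C1 ac1 G1 U2"
      and iso: "\<exists>\<phi>. module_iso ac1 G1 U1 U2 \<phi>"
    obtain m where m: "U1 \<subseteq> V1 m" "U2 \<subseteq> V1 m"
      using S1.irred_submods_same_degree[OF irr iso] .
    define U1' U2' where "U1' = T_inv m ` U1" and "U2' = T_inv m ` U2"
    have U': "U1' \<subseteq> V2 m" "U2' \<subseteq> V2 m" unfolding U1'_def U2'_def using T_inv_in m by auto
    have img: "T m ` U1' = U1" "T m ` U2' = U2"
      unfolding U1'_def U2'_def using T_T_inv m by (force simp: image_image)+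
    have irr': "irred_submod C2 ac2 G2 U1'" "irred_submod C2 ac2 G2 U2'"
      using irred_submod_image_iff[OF U'(1)] irred_submod_image_iff[OF U'(2)] irr img by simp_all
    have "\<exists>\<psi>. module_iso ac2 G2 U1' U2' \<psi>"
      using ex_module_iso_image_iff[OF U'] iso img irr'(1) by (simp add: irred_submod_def)
    then have "U1' = U2'" using mf irr' unfolding multiplicity_free_def by blast
    then show "U1 = U2" using img by simp
  qed
qed

end



section \<open>Polynomials in Pluecker coordinates\<close>

lemma Iseq_nth_ge: assumes "I \<in> Iseq d N" "i < d" shows "i + 1 \<le> I ! i"
  using assms(2)
proof (induction i)
  case 0
  have "I ! 0 \<in> set I" using assms 0 unfolding Iseq_def by auto
  then show ?case using assms(1) unfolding Iseq_def by auto
next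
  case (Suc i)
  then have "I ! i < I ! Suc i" using assms(1) unfolding Iseq_def by (auto intro: sorted_wrt_nth_less)
  then show ?case using Suc by simp
qed

lemma Iseq_nth_le: assumes "I \<in> Iseq d N" "i < d" shows "I ! i \<le> N"
proof -
  have "I ! i \<in> set I" using assms unfolding Iseq_def by auto
  then show ?thesis using assms(1) unfolding Iseq_def by auto
qed

lemma Iseq_lt: assumes "I \<in> Iseq d N" "i < j" "j < d" shows "I ! i < I ! j"
  using assms unfolding Iseq_def by (auto intro: sorted_wrt_nth_less)

lemma Iseq_gap: assumes "I \<in> Iseq d N" "i \<le> j" "j < d" shows "I ! i + (j - i) \<le> I ! j"
  using assms(2,3)
proof (induction j)
  case 0 then show ?case by simp
next
  case (Suc j)
  show ?case
  proof (cases "i = Suc j")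
    case True then show ?thesis by simp
  next
    case False
    then have "i \<le> j" using Suc by simp
    then have "I ! i + (j - i) \<le> I ! j" using Suc by simp
    moreover have "I ! j < I ! Suc j" using Iseq_lt[OF assms(1)] Suc by simp
    ultimately show ?thesis using \<open>i \<le> j\<close> by simp
  qed
qed

definition peval :: "(complex \<times> nat list list) list \<Rightarrow> cmat \<Rightarrow> complex" where
  "peval xs A = (\<Sum>(c, Is)\<leftarrow>xs. c * (\<Prod>I\<leftarrow>Is. pluecker I A))"

definition hom_poly :: "nat \<Rightarrow> nat \<Rightarrow> nat \<Rightarrow> (complex \<times> nat list list) list \<Rightarrow> bool" where
  "hom_poly d N n xs \<longleftrightarrow> (\<forall>(c, Is)\<in>set xs. length Is = n \<and> (\<forall>I\<in>set Is. I \<in> Iseq d N))"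

definition hom_poly_fun :: "nat \<Rightarrow> nat \<Rightarrow> nat \<Rightarrow> (cmat \<Rightarrow> complex) \<Rightarrow> bool" where
  "hom_poly_fun d N n F \<longleftrightarrow> (\<exists>xs. hom_poly d N n xs \<and> F = peval xs)"

lemma poly_fun_iff_peval: "poly_fun d N F \<longleftrightarrow> (\<exists>xs. (\<forall>(c, Is)\<in>set xs. \<forall>I\<in>set Is. I \<in> Iseq d N) \<and> F = peval xs)"
  unfolding poly_fun_def peval_def by (simp add: fun_eq_iff)

lemma hom_poly_fun_imp_poly_fun: "hom_poly_fun d N n F \<Longrightarrow> poly_fun d N F"
  unfolding hom_poly_fun_def poly_fun_iff_peval hom_poly_def by fastforce

lemma hom_poly_imp_poly_fun: "hom_poly d N n xs \<Longrightarrow> poly_fun d N (peval xs)"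
  using hom_poly_fun_imp_poly_fun unfolding hom_poly_fun_def by blast

lemma peval_Nil[simp]: "peval [] A = 0" by (simp add: peval_def)

lemma peval_Cons[simp]: "peval ((c, Is) # xs) A = c * (\<Prod>I\<leftarrow>Is. pluecker I A) + peval xs A"
  by (simp add: peval_def)

lemma peval_append[simp]: "peval (xs @ ys) A = peval xs A + peval ys A" by (simp add: peval_def)

lemma peval_smult: "peval (map (\<lambda>(c, Is). (k * c, Is)) xs) A = k * peval xs A"
  by (induction xs) (auto simp: algebra_simps)

lemma peval_filter_sum:
  assumes "\<forall>(c, Is)\<in>set xs. length Is < M"
  shows "peval xs A = (\<Sum>n<M. peval (filter (\<lambda>(c, Is). length Is = n) xs) A)"
  using assms
proof (induction xs)
  case Nil then show ?case by simp
next
  case (Cons x xs)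
  obtain c Is where x: "x = (c, Is)" by fastforce
  have l: "length Is < M" using Cons.prems x by auto
  have "(\<Sum>n<M. peval (filter (\<lambda>(c, Is). length Is = n) (x # xs)) A)
      = (\<Sum>n<M. (if length Is = n then c * (\<Prod>I\<leftarrow>Is. pluecker I A) else 0)) +
        (\<Sum>n<M. peval (filter (\<lambda>(c, Is). length Is = n) xs) A)"
    unfolding sum.distrib[symmetric] by (rule sum.cong, auto simp: x)
  also have "(\<Sum>n<M. (if length Is = n then c * (\<Prod>I\<leftarrow>Is. pluecker I A) else 0)) = c * (\<Prod>I\<leftarrow>Is. pluecker I A)"
    using l by (simp add: sum.delta)
  finally show ?case using Cons x by simp
qed

lemma poly_fun_homogeneous_decomp:
  assumes "poly_fun d N F"
  shows "\<exists>M Fs. (\<forall>n. hom_poly_fun d N n (Fs n)) \<and> F = (\<lambda>A. \<Sum>n<M. Fs n A)"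
proof -
  obtain xs where xs: "\<forall>(c, Is)\<in>set xs. \<forall>I\<in>set Is. I \<in> Iseq d N" "F = peval xs"
    using assms unfolding poly_fun_iff_peval by blast
  define M where "M = Suc (sum_list (map (\<lambda>(c, Is). length Is) xs))"
  have lt: "\<forall>(c, Is)\<in>set xs. length Is < M"
  proof (intro ballI, clarify)
    fix c Is assume "(c, Is) \<in> set xs"
    then have "length Is \<le> sum_list (map (\<lambda>(c, Is). length Is) xs)"
      using member_le_sum_list[of "length Is" "map (\<lambda>(c, Is). length Is) xs"] by force
    then show "length Is < M" unfolding M_def by simp
  qed
  define Fs where "Fs n = peval (filter (\<lambda>(c, Is). length Is = n) xs)" for n
  have "\<forall>n. hom_poly_fun d N n (Fs n)"
  proof
    fix n show "hom_poly_fun d N n (Fs n)" unfolding hom_poly_fun_def Fs_def hom_poly_def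
      by (rule exI[of _ "filter (\<lambda>(c, Is). length Is = n) xs"]) (use xs(1) in auto)
  qed
  moreover have "F = (\<lambda>A. \<Sum>n<M. Fs n A)" using peval_filter_sum[OF lt] xs(2) Fs_def by auto
  ultimately show ?thesis by blast
qed

lemma hom_poly_fun_zero: "hom_poly_fun d N n (\<lambda>A. 0)"
  unfolding hom_poly_fun_def hom_poly_def by (rule exI[of _ "[]"]) (auto simp: fun_eq_iff)

lemma hom_poly_fun_add: "hom_poly_fun d N n F \<Longrightarrow> hom_poly_fun d N n G \<Longrightarrow> hom_poly_fun d N n (\<lambda>A. F A + G A)"
  unfolding hom_poly_fun_def hom_poly_def by (elim exE conjE, rule_tac x="xs @ xsa" in exI) auto

lemma hom_poly_fun_smult: "hom_poly_fun d N n F \<Longrightarrow> hom_poly_fun d N n (\<lambda>A. k * F A)"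
  unfolding hom_poly_fun_def
proof (elim exE conjE)
  fix xs assume "hom_poly d N n xs" "F = peval xs"
  then show "\<exists>xs. hom_poly d N n xs \<and> (\<lambda>A. k * F A) = peval xs"
    by (intro exI[of _ "map (\<lambda>(c, Is). (k * c, Is)) xs"]) (auto simp: hom_poly_def peval_smult)
qed

lemma hom_poly_fun_sum: "finite D \<Longrightarrow> (\<forall>x\<in>D. hom_poly_fun d N n (Fs x)) \<Longrightarrow> hom_poly_fun d N n (\<lambda>A. \<Sum>x\<in>D. Fs x A)"
proof (induction D rule: finite_induct)
  case empty then show ?case by (simp add: hom_poly_fun_zero)
next
  case (insert x F) then show ?case using hom_poly_fun_add[of d N n "Fs x"] by simp
qed

definition pmult :: "(complex \<times> nat list list) list \<Rightarrow> (complex \<times> nat list list) list \<Rightarrow> (complex \<times> nat list list) list" where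
  "pmult xs ys = concat (map (\<lambda>(c, Is). map (\<lambda>(c', Js). (c * c', Is @ Js)) ys) xs)"

lemma peval_pmult: "peval (pmult xs ys) A = peval xs A * peval ys A"
proof (induction xs)
  case Nil then show ?case by (simp add: pmult_def)
next
  case (Cons x xs)
  obtain c Is where x: "x = (c, Is)" by fastforce
  have "peval (map (\<lambda>(c', Js). (c * c', Is @ Js)) ys) A = c * (\<Prod>I\<leftarrow>Is. pluecker I A) * peval ys A"
    by (induction ys) (auto simp: algebra_simps)
  then show ?case using Cons by (simp add: pmult_def x algebra_simps)
qed

lemma hom_poly_fun_mult: "hom_poly_fun d N m F \<Longrightarrow> hom_poly_fun d N n G \<Longrightarrow> hom_poly_fun d N (m + n) (\<lambda>A. F A * G A)"
  unfolding hom_poly_fun_def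
proof (elim exE conjE)
  fix xs ys assume h: "hom_poly d N m xs" "F = peval xs" "hom_poly d N n ys" "G = peval ys"
  have "hom_poly d N (m + n) (pmult xs ys)" using h unfolding hom_poly_def pmult_def by fastforce
  then show "\<exists>xs. hom_poly d N (m + n) xs \<and> (\<lambda>A. F A * G A) = peval xs"
    using h by (intro exI[of _ "pmult xs ys"]) (auto simp: peval_pmult)
qed

lemma hom_poly_fun_one: "hom_poly_fun d N 0 (\<lambda>A. 1)"
  unfolding hom_poly_fun_def hom_poly_def by (rule exI[of _ "[(1, [])]"]) (auto simp: fun_eq_iff)

lemma hom_poly_fun_pluecker: "J \<in> Iseq d N \<Longrightarrow> hom_poly_fun d N 1 (pluecker J)"
  unfolding hom_poly_fun_def hom_poly_def by (rule exI[of _ "[(1, [J])]"]) (auto simp: fun_eq_iff)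

lemma hom_poly_fun_prod_list: "(\<forall>I\<in>set Is. hom_poly_fun d N 1 (Fs I)) \<Longrightarrow> hom_poly_fun d N (length Is) (\<lambda>A. \<Prod>I\<leftarrow>Is. Fs I A)"
proof (induction Is)
  case Nil then show ?case using hom_poly_fun_one by simp
next
  case (Cons a Is) then show ?case using hom_poly_fun_mult[of d N 1 "Fs a" "length Is"] by simp
qed


lemma poly_fun_zero: "poly_fun d N (\<lambda>A. 0)"
  unfolding poly_fun_iff_peval by (rule exI[of _ "[]"]) (auto simp: fun_eq_iff)

lemma poly_fun_add: "poly_fun d N F \<Longrightarrow> poly_fun d N G \<Longrightarrow> poly_fun d N (\<lambda>A. F A + G A)"
  unfolding poly_fun_iff_peval by (elim exE conjE, rule_tac x="xs @ xsa" in exI) auto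

lemma poly_fun_sum: "finite D \<Longrightarrow> (\<forall>x\<in>D. poly_fun d N (Fs x)) \<Longrightarrow> poly_fun d N (\<lambda>A. \<Sum>x\<in>D. Fs x A)"
proof (induction D rule: finite_induct)
  case empty then show ?case by (simp add: poly_fun_zero)
next
  case (insert x F) then show ?case using poly_fun_add[of d N "Fs x"] by simp
qed

lemma poly_coeffs_zero:
  assumes e: "0 < (e::nat)" and H: "\<And>t::complex. t \<noteq> 0 \<Longrightarrow> (\<Sum>n<M. c n * t ^ (e * n)) = 0"
  shows "n < M \<Longrightarrow> c n = 0"
proof -
  assume nM: "n < M"
  define P where "P = (\<Sum>n<M. monom (c n) (e * n))"
  have peval: "poly P t = (\<Sum>n<M. c n * t ^ (e * n))" for t unfolding P_def by (simp add: poly_sum poly_monom)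
  have "P = 0"
  proof (rule ccontr)
    assume "P \<noteq> 0"
    then have "finite {t. poly P t = 0}" by (rule poly_roots_finite)
    moreover have "UNIV - {0} \<subseteq> {t. poly P t = 0}" using H peval by auto
    ultimately have "finite (UNIV - {0::complex})" by (rule finite_subset[rotated])
    then show False by (simp add: infinite_UNIV_char_0)
  qed
  then have "0 = coeff P (e * n)" by simp
  also have "\<dots> = (\<Sum>m<M. if e * m = e * n then c m else 0)" unfolding P_def coeff_sum by simp
  also have "\<dots> = (\<Sum>m<M. if m = n then c m else 0)" using e by (intro sum.cong) auto
  also have "\<dots> = c n" using nM by (simp add: sum.delta)
  finally show ?thesis by simp
qed

lemma pluecker_eq_0_if_zero_entry:
  assumes "\<And>\<sigma>. \<sigma> permutes {..<length I} \<Longrightarrow> \<exists>r<length I. A (I ! r - 1) (\<sigma> r) = 0"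
  shows "pluecker I A = 0"
  unfolding pluecker_def
proof (rule sum.neutral, intro ballI)
  fix \<sigma> assume "\<sigma> \<in> {\<sigma>. \<sigma> permutes {..<length I}}"
  then obtain r where "r < length I" "A (I ! r - 1) (\<sigma> r) = 0" using assms by blast
  then have "(\<Prod>r<length I. A (I ! r - 1) (\<sigma> r)) = 0" by (intro prod_zero) auto
  then show "of_int (sign \<sigma>) * (\<Prod>r<length I. A (I ! r - 1) (\<sigma> r)) = 0" by simp
qed

lemma permutes_ex_ge_le:
  fixes \<sigma> :: "nat \<Rightarrow> nat"
  assumes \<sigma>: "\<sigma> permutes {..<d}" and r: "r < d"
  shows "\<exists>s. r \<le> s \<and> s < d \<and> \<sigma> s \<le> r"
proof (rule ccontr)
  assume "\<not> ?thesis"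
  then have "\<sigma> ` {r..<d} \<subseteq> {r + 1..<d}" using permutes_in_image[OF \<sigma>] by fastforce
  moreover have "inj_on \<sigma> {r..<d}" using permutes_inj[OF \<sigma>] by (simp add: inj_on_def inj_def)
  ultimately have "card {r..<d} \<le> card {r + 1..<d}" using card_inj_on_le by blast
  then show False using r by simp
qed

definition pluecker_mat :: "nat list \<Rightarrow> cmat \<Rightarrow> complex mat" where
  "pluecker_mat I A = mat (length I) (length I) (\<lambda>(r, k). A (I ! r - 1) k)"

lemma pluecker_mat_carrier: "pluecker_mat I A \<in> carrier_mat (length I) (length I)"
  by (simp add: pluecker_mat_def)

lemma pluecker_det: "pluecker I A = det (pluecker_mat I A)"
proof -
  let ?n = "length I"
  have "det (pluecker_mat I A) = (\<Sum>p\<in>{p. p permutes {0..<?n}}. signof p * (\<Prod>i = 0..<?n. pluecker_mat I A $$ (i, p i)))"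
    by (rule det_def'[OF pluecker_mat_carrier])
  also have "\<dots> = (\<Sum>p\<in>{p. p permutes {..<?n}}. of_int (sign p) * (\<Prod>i<?n. A (I ! i - 1) (p i)))"
  proof (rule sum.cong)
    show "{p. p permutes {0..<?n}} = {p. p permutes {..<?n}}" by (simp add: atLeast0LessThan)
  next
    fix p assume "p \<in> {p. p permutes {..<?n}}"
    then have p: "p permutes {..<?n}" by simp
    have pl: "\<And>x. x < ?n \<Longrightarrow> p x < ?n" using permutes_in_image[OF p] by auto
    have "(\<Prod>i = 0..<?n. pluecker_mat I A $$ (i, p i)) = (\<Prod>i<?n. A (I ! i - 1) (p i))"
      unfolding atLeast0LessThan
      by (rule prod.cong, simp, simp add: pluecker_mat_def pl)
    then show "signof p * (\<Prod>i = 0..<?n. pluecker_mat I A $$ (i, p i)) = of_int (sign p) * (\<Prod>i<?n. A (I ! i - 1) (p i))"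
      by simp
  qed
  finally show ?thesis unfolding pluecker_def by simp
qed

lemma pluecker_repeated_row:
  assumes "i < length J" "j < length J" "i \<noteq> j" "J ! i = J ! j"
  shows "pluecker J A = 0"
  unfolding pluecker_det
proof (rule det_identical_rows[OF pluecker_mat_carrier assms(3,1,2)])
  show "row (pluecker_mat J A) i = row (pluecker_mat J A) j"
    using assms by (auto simp: pluecker_mat_def row_def)
qed

lemma pluecker_perm:
  assumes p: "p permutes {..<length J'}" and J: "J = permute_list p J'"
  shows "pluecker J A = of_int (sign p) * pluecker J' A"
proof -
  let ?n = "length J'"
  have p': "p permutes {0..<?n}" using p by (simp add: atLeast0LessThan)
  have "pluecker_mat J A = mat ?n ?n (\<lambda>(i, j). pluecker_mat J' A $$ (p i, j))"
  proof -
    have pl: "\<And>x. x < ?n \<Longrightarrow> p x < ?n" using permutes_in_image[OF p] by auto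
    show ?thesis unfolding J by (rule eq_matI) (auto simp: pluecker_mat_def permute_list_nth[OF p] pl)
  qed
  then show ?thesis unfolding pluecker_det using det_permute_rows[OF pluecker_mat_carrier p'] by simp
qed

lemma hom_poly_fun_pluecker_any:
  assumes l: "length J = d" and s: "set J \<subseteq> {1..N}"
  shows "hom_poly_fun d N 1 (pluecker J)"
proof (cases "distinct J")
  case True
  define J' where "J' = sort J"
  have J': "J' \<in> Iseq d N" unfolding J'_def Iseq_def using True l s
    by (auto simp: strict_sorted_iff)
  obtain p where p: "p permutes {..<length J'}" "permute_list p J' = J"
    using mset_eq_permutation[of J J'] unfolding J'_def by auto
  have "pluecker J = (\<lambda>A. of_int (sign p) * pluecker J' A)"
    using pluecker_perm[OF p(1) p(2)[symmetric]] by auto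
  then show ?thesis using hom_poly_fun_smult[OF hom_poly_fun_pluecker[OF J']] by simp
next
  case False
  then obtain i j where "i < length J" "j < length J" "i \<noteq> j" "J ! i = J ! j"
    by (auto simp: distinct_conv_nth)
  then have "pluecker J = (\<lambda>A. 0)" using pluecker_repeated_row by blast
  then show ?thesis using hom_poly_fun_zero by simp
qed

lemma pluecker_mmult:
  "pluecker I (mmult N g A) = (\<Sum>f\<in>PiE {..<length I} (\<lambda>_. {..<N}).
      (\<Prod>r<length I. g (I ! r - 1) (f r)) * pluecker (map (\<lambda>r. f r + 1) [0..<length I]) A)"
proof -
  let ?n = "length I" and ?P = "PiE {..<length I} (\<lambda>_. {..<N})" and ?S = "{\<sigma>. \<sigma> permutes {..<length I}}"
  have "pluecker I (mmult N g A) = (\<Sum>\<sigma>\<in>?S. of_int (sign \<sigma>) * (\<Prod>r<?n. \<Sum>j<N. g (I ! r - 1) j * A j (\<sigma> r)))"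
    unfolding pluecker_def mmult_def by simp
  also have "\<dots> = (\<Sum>\<sigma>\<in>?S. \<Sum>f\<in>?P. of_int (sign \<sigma>) * ((\<Prod>r<?n. g (I ! r - 1) (f r)) * (\<Prod>r<?n. A (f r) (\<sigma> r))))"
    by (rule sum.cong[OF refl]) (simp add: prod_sum_PiE sum_distrib_left prod.distrib)
  also have "\<dots> = (\<Sum>f\<in>?P. \<Sum>\<sigma>\<in>?S. of_int (sign \<sigma>) * ((\<Prod>r<?n. g (I ! r - 1) (f r)) * (\<Prod>r<?n. A (f r) (\<sigma> r))))"
    by (rule sum.swap)
  also have "\<dots> = (\<Sum>f\<in>?P. (\<Prod>r<?n. g (I ! r - 1) (f r)) * pluecker (map (\<lambda>r. f r + 1) [0..<?n]) A)"
  proof (rule sum.cong[OF refl])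
    fix f
    have "pluecker (map (\<lambda>r. f r + 1) [0..<?n]) A = (\<Sum>\<sigma>\<in>?S. of_int (sign \<sigma>) * (\<Prod>r<?n. A (f r) (\<sigma> r)))"
      unfolding pluecker_def by simp
    then show "(\<Sum>\<sigma>\<in>?S. of_int (sign \<sigma>) * ((\<Prod>r<?n. g (I ! r - 1) (f r)) * (\<Prod>r<?n. A (f r) (\<sigma> r)))) =
      (\<Prod>r<?n. g (I ! r - 1) (f r)) * pluecker (map (\<lambda>r. f r + 1) [0..<?n]) A"
      by (simp add: sum_distrib_left algebra_simps)
  qed
  finally show ?thesis .
qed

lemma hom_poly_fun_pluecker_mmult:
  assumes "length I = d"
  shows "hom_poly_fun d N 1 (\<lambda>A. pluecker I (mmult N g A))"
proof -
  have "hom_poly_fun d N 1 (\<lambda>A. \<Sum>f\<in>PiE {..<length I} (\<lambda>_. {..<N}).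
      (\<Prod>r<length I. g (I ! r - 1) (f r)) * pluecker (map (\<lambda>r. f r + 1) [0..<length I]) A)"
  proof (rule hom_poly_fun_sum)
    show "finite (PiE {..<length I} (\<lambda>_. {..<N}))" by (simp add: finite_PiE)
    show "\<forall>f\<in>PiE {..<length I} (\<lambda>_. {..<N}). hom_poly_fun d N 1 (\<lambda>A. (\<Prod>r<length I. g (I ! r - 1) (f r)) *
        pluecker (map (\<lambda>r. f r + 1) [0..<length I]) A)"
    proof
      fix f assume f: "f \<in> PiE {..<length I} (\<lambda>_. {..<N})"
      have "set (map (\<lambda>r. f r + 1) [0..<length I]) \<subseteq> {1..N}"
        using f by (auto simp: PiE_def Pi_def Suc_leI)
      then have "hom_poly_fun d N 1 (pluecker (map (\<lambda>r. f r + 1) [0..<length I]))"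
        using hom_poly_fun_pluecker_any assms by simp
      then show "hom_poly_fun d N 1 (\<lambda>A. (\<Prod>r<length I. g (I ! r - 1) (f r)) * pluecker (map (\<lambda>r. f r + 1) [0..<length I]) A)"
        by (rule hom_poly_fun_smult)
    qed
  qed
  then show ?thesis unfolding pluecker_mmult[symmetric] .
qed

lemma hom_poly_fun_mmult:
  assumes "hom_poly_fun d N n F" shows "hom_poly_fun d N n (\<lambda>A. F (mmult N g A))"
proof -
  obtain xs where xs: "hom_poly d N n xs" "F = peval xs" using assms unfolding hom_poly_fun_def by blast
  have "hom_poly_fun d N n (\<lambda>A. peval xs (mmult N g A))" using xs(1)
  proof (induction xs)
    case Nil then show ?case using hom_poly_fun_zero by simp
  next
    case (Cons x xs)
    obtain c Is where x: "x = (c, Is)" by fastforce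
    have h: "length Is = n" "\<forall>I\<in>set Is. I \<in> Iseq d N" "hom_poly d N n xs"
      using Cons.prems x unfolding hom_poly_def by auto
    have "hom_poly_fun d N (length Is) (\<lambda>A. \<Prod>I\<leftarrow>Is. pluecker I (mmult N g A))"
      by (rule hom_poly_fun_prod_list) (use h(2) hom_poly_fun_pluecker_mmult in \<open>auto simp: Iseq_def\<close>)
    then have "hom_poly_fun d N n (\<lambda>A. c * (\<Prod>I\<leftarrow>Is. pluecker I (mmult N g A)))" using h(1) hom_poly_fun_smult by simp
    then show ?case using hom_poly_fun_add Cons.IH[OF h(3)] x by simp
  qed
  then show ?thesis using xs(2) by simp
qed

lemma poly_fun_mmult: "poly_fun d N F \<Longrightarrow> poly_fun d N (\<lambda>A. F (mmult N g A))"
proof -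
  assume "poly_fun d N F"
  then obtain M Fs where M: "\<forall>n. hom_poly_fun d N n (Fs n)" "F = (\<lambda>A. \<Sum>n<M. Fs n A)" using poly_fun_homogeneous_decomp by blast
  have "poly_fun d N (\<lambda>A. \<Sum>n\<in>{..<M}. Fs n (mmult N g A))"
  proof (rule poly_fun_sum)
    show "\<forall>n\<in>{..<M}. poly_fun d N (\<lambda>A. Fs n (mmult N g A))"
      using M(1) hom_poly_fun_mmult hom_poly_fun_imp_poly_fun by blast
  qed simp
  then show ?thesis using M(2) by simp
qed

lemma pluecker_scale: "pluecker I (\<lambda>i k. t * A i k) = t ^ length I * pluecker I A"
  unfolding pluecker_def by (simp add: prod.distrib sum_distrib_left algebra_simps)

lemma peval_scale:
  assumes "hom_poly d N n xs" shows "peval xs (\<lambda>i k. t * A i k) = t ^ (d * n) * peval xs A"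
  using assms
proof (induction xs)
  case Nil then show ?case by simp
next
  case (Cons x xs)
  obtain c Is where x: "x = (c, Is)" by fastforce
  have h: "length Is = n" "\<forall>I\<in>set Is. length I = d" "hom_poly d N n xs"
    using Cons.prems x unfolding hom_poly_def Iseq_def by auto
  have "(\<Prod>I\<leftarrow>Is. pluecker I (\<lambda>i k. t * A i k)) = t ^ (d * length Is) * (\<Prod>I\<leftarrow>Is. pluecker I A)"
    using h(2) by (induction Is) (auto simp: pluecker_scale power_add algebra_simps)
  then show ?case using Cons.IH[OF h(3)] x h(1) by (simp add: algebra_simps)
qed


lemma hom_poly_fun_scale: "hom_poly_fun d N n F \<Longrightarrow> F (\<lambda>i k. t * A i k) = t ^ (d * n) * F A"
  unfolding hom_poly_fun_def using peval_scale by blast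

lemma pluecker_cong:
  assumes "\<forall>r<length I. \<forall>k<length I. A (I ! r - 1) k = B (I ! r - 1) k"
  shows "pluecker I A = pluecker I B"
  unfolding pluecker_def
proof (rule sum.cong[OF refl])
  fix \<sigma> assume "\<sigma> \<in> {\<sigma>. \<sigma> permutes {..<length I}}"
  then have s: "\<And>r. r < length I \<Longrightarrow> \<sigma> r < length I" using permutes_in_image by fastforce
  show "of_int (sign \<sigma>) * (\<Prod>r<length I. A (I ! r - 1) (\<sigma> r)) = of_int (sign \<sigma>) * (\<Prod>r<length I. B (I ! r - 1) (\<sigma> r))"
    using assms s by (intro arg_cong[where f="\<lambda>x. _ * x"] prod.cong) auto
qed

lemma pluecker_agree:
  assumes I: "I \<in> Iseq d N" and ag: "\<forall>i<N. \<forall>k<d. A i k = B i k"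
  shows "pluecker I A = pluecker I B"
proof (rule pluecker_cong, intro allI impI)
  fix r k assume r: "r < length I" and k: "k < length I"
  have l: "length I = d" using I by (simp add: Iseq_def)
  have "I ! r - 1 < N" using Iseq_nth_le[OF I, of r] Iseq_nth_ge[OF I, of r] r l by simp
  then show "A (I ! r - 1) k = B (I ! r - 1) k" using ag k l by simp
qed

lemma peval_agree:
  assumes "hom_poly d N n xs" and ag: "\<forall>i<N. \<forall>k<d. A i k = B i k"
  shows "peval xs A = peval xs B"
  using assms(1)
proof (induction xs)
  case Nil then show ?case by simp
next
  case (Cons x xs)
  obtain c Is where x: "x = (c, Is)" by fastforce
  have h: "\<forall>I\<in>set Is. I \<in> Iseq d N" "hom_poly d N n xs" using Cons.prems x unfolding hom_poly_def by auto
  have "(\<Prod>I\<leftarrow>Is. pluecker I A) = (\<Prod>I\<leftarrow>Is. pluecker I B)"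
    using h(1) pluecker_agree[OF _ ag] by (induction Is) auto
  then show ?case using Cons.IH[OF h(2)] x by simp
qed

section \<open>Matrices\<close>

definition to_mat :: "nat \<Rightarrow> cmat \<Rightarrow> complex mat" where
  "to_mat n g = mat n n (\<lambda>(i, k). g i k)"

lemma to_mat_carrier: "to_mat n g \<in> carrier_mat n n" by (simp add: to_mat_def)

lemma to_mat_mmult: "to_mat n (mmult n g h) = to_mat n g * to_mat n h"
  by (rule eq_matI) (auto simp: to_mat_def mmult_def scalar_prod_def atLeast0LessThan intro: sum.cong)

lemma to_mat_idm: "to_mat n (idm n) = 1\<^sub>m n"
  by (rule eq_matI) (auto simp: to_mat_def idm_def)

lemma supported_mmult: "supported n n g \<Longrightarrow> supported n m A \<Longrightarrow> supported n m (mmult n g A)"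
  unfolding supported_def mmult_def by auto

lemma supported_principal_sub: "supported n n (principal_sub p n g)"
  unfolding supported_def principal_sub_def by auto

lemma mmult_agree:
  assumes "\<forall>i<N'. \<forall>k<d'. C i k = D i k"
  shows "\<forall>i<N'. \<forall>k<d'. mmult N' g C i k = mmult N' g D i k"
  using assms unfolding mmult_def by auto

lemma mmult_eqI:
  assumes "supported n n g" "supported n n h" "supported n n k" "to_mat n k = to_mat n g * to_mat n h"
  shows "mmult n g h = k"
proof (intro ext)
  fix i j
  show "mmult n g h i j = k i j"
  proof (cases "i < n \<and> j < n")
    case True
    have "to_mat n (mmult n g h) $$ (i, j) = to_mat n k $$ (i, j)" using assms(4) to_mat_mmult by simp
    then show ?thesis using True by (simp add: to_mat_def)
  next
    case False
    then show ?thesis using assms(1-3) supported_mmult[OF assms(1,2)] unfolding supported_def by auto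
  qed
qed

lemma invertible_det_nonzero: "Defs.invertible_mat n g \<Longrightarrow> det (to_mat n g) \<noteq> 0"
proof -
  assume "Defs.invertible_mat n g"
  then obtain h where "mmult n g h = idm n" unfolding Defs.invertible_mat_def by blast
  then have "to_mat n g * to_mat n h = 1\<^sub>m n" using to_mat_mmult to_mat_idm by metis
  then have "det (to_mat n g * to_mat n h) = 1" by simp
  then have "det (to_mat n g) * det (to_mat n h) = 1" using det_mult[OF to_mat_carrier[of n g] to_mat_carrier[of n h]] by simp
  then show ?thesis by auto
qed

definition of_mat :: "nat \<Rightarrow> complex mat \<Rightarrow> cmat" where
  "of_mat n B = (\<lambda>i k. if i < n \<and> k < n then B $$ (i, k) else 0)"

lemma det_nonzero_invertible:
  assumes s: "supported n n g" and dt: "det (to_mat n g) \<noteq> 0"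
  shows "Defs.invertible_mat n g"
proof -
  have "to_mat n g \<in> Units (ring_mat TYPE(complex) n b)" by (rule det_non_zero_imp_unit[OF to_mat_carrier dt])
  then obtain B where B: "B \<in> carrier_mat n n" "B * to_mat n g = 1\<^sub>m n" "to_mat n g * B = 1\<^sub>m n"
    unfolding Units_def ring_mat_def by auto
  define h where "h = of_mat n B"
  have hs: "supported n n h" unfolding h_def of_mat_def supported_def by auto
  have th: "to_mat n h = B" using B(1) unfolding h_def of_mat_def to_mat_def by (intro eq_matI) auto
  have isupp: "supported n n (idm n)" unfolding supported_def idm_def by auto
  have "mmult n g h = idm n" by (rule mmult_eqI[OF s hs isupp]) (simp add: th to_mat_idm B)
  moreover have "mmult n h g = idm n" by (rule mmult_eqI[OF hs s isupp]) (simp add: th to_mat_idm B)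
  ultimately show ?thesis unfolding Defs.invertible_mat_def using s hs by blast
qed

lemma det_to_mat_upper:
  assumes "\<forall>i j. j < i \<longrightarrow> b i j = 0"
  shows "det (to_mat n b) = (\<Prod>i<n. b i i)"
proof -
  have "det (to_mat n b) = prod_list (diag_mat (to_mat n b))"
    by (rule det_upper_triangular[of _ n]) (use assms in \<open>auto simp: to_mat_def intro!: upper_triangularI\<close>)
  also have "\<dots> = (\<Prod>i<n. b i i)"
    unfolding prod_list_diag_prod by (simp add: to_mat_def atLeast0LessThan)
  finally show ?thesis .
qed

definition upper_tri :: "cmat \<Rightarrow> bool" where "upper_tri b \<longleftrightarrow> (\<forall>i j. j < i \<longrightarrow> b i j = 0)"

lemma borel_iff:
  "b \<in> borel n \<longleftrightarrow> supported n n b \<and> (\<forall>i j. j < i \<longrightarrow> b i j = 0) \<and> (\<forall>i<n. b i i \<noteq> 0)"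
proof -
  have "\<And>b. (\<forall>i j. j < i \<longrightarrow> b i j = 0) \<Longrightarrow> det (to_mat n b) \<noteq> 0 \<longleftrightarrow> (\<forall>i<n. b i i \<noteq> 0)"
    using det_to_mat_upper by (simp, blast)
  then show ?thesis unfolding borel_def using invertible_det_nonzero det_nonzero_invertible Defs.invertible_mat_def by blast
qed


lemma borel_upper_tri: "b \<in> borel n \<Longrightarrow> upper_tri b" unfolding borel_def upper_tri_def by auto

lemma idm_borel: "idm N \<in> borel N"
  unfolding borel_iff supported_def idm_def by auto

lemma borel_scale: "b \<in> borel N \<Longrightarrow> t \<noteq> 0 \<Longrightarrow> (\<lambda>i k. t * b i k) \<in> borel N"
  unfolding borel_iff supported_def by auto

definition top_minor :: "nat \<Rightarrow> cmat \<Rightarrow> complex" where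
  "top_minor p C = det (mat p p (\<lambda>(i, k). C i k))"

definition lower_block :: "nat \<Rightarrow> cmat \<Rightarrow> cmat" where
  "lower_block p C = (\<lambda>i k. C (i + p) (k + p))"

definition lower_left_zero :: "nat \<Rightarrow> cmat \<Rightarrow> bool" where
  "lower_left_zero p C \<longleftrightarrow> (\<forall>j k. p \<le> j \<longrightarrow> k < p \<longrightarrow> C j k = 0)"

definition zero_rows_from :: "nat \<Rightarrow> cmat \<Rightarrow> bool" where "zero_rows_from l C \<longleftrightarrow> (\<forall>j k. l \<le> j \<longrightarrow> C j k = 0)"

lemma top_minor_eq_det: "top_minor p C = det (to_mat p C)" by (simp add: top_minor_def to_mat_def)

lemma top_minor_mmult:
  assumes C: "lower_left_zero p C" and pN: "p \<le> N"
  shows "top_minor p (mmult N X C) = top_minor p X * top_minor p C"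
proof -
  have "to_mat p (mmult N X C) = to_mat p (mmult p X C)"
  proof (rule eq_matI)
    fix i k assume ik: "i < dim_row (to_mat p (mmult p X C))" "k < dim_col (to_mat p (mmult p X C))"
    then have i: "i < p" and k: "k < p" by (auto simp: to_mat_def)
    have "(\<Sum>j<N. X i j * C j k) = (\<Sum>j<p. X i j * C j k)"
    proof (rule sum.mono_neutral_right)
      show "\<forall>j\<in>{..<N} - {..<p}. X i j * C j k = 0" using C k unfolding lower_left_zero_def by auto
    qed (use pN in auto)
    then show "to_mat p (mmult N X C) $$ (i, k) = to_mat p (mmult p X C) $$ (i, k)"
      using i k by (simp add: to_mat_def mmult_def)
  qed (auto simp: to_mat_def)
  then show ?thesis unfolding top_minor_eq_det to_mat_mmult
    using det_mult[OF to_mat_carrier to_mat_carrier] by simp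
qed

lemma top_minor_idm: "p \<le> N \<Longrightarrow> top_minor p (idm N) = 1"
proof -
  assume "p \<le> N"
  then have "to_mat p (idm N) = to_mat p (idm p)" by (intro eq_matI) (auto simp: to_mat_def idm_def)
  then show ?thesis unfolding top_minor_eq_det to_mat_idm by simp
qed

lemma lower_left_zero_mmult:
  assumes g: "\<forall>i j. p \<le> i \<longrightarrow> j < p \<longrightarrow> g i j = 0" and C: "lower_left_zero p C"
  shows "lower_left_zero p (mmult N g C)"
  unfolding lower_left_zero_def mmult_def
proof (intro allI impI)
  fix j k assume jk: "p \<le> j" "k < p"
  show "(\<Sum>m<N. g j m * C m k) = 0"
  proof (intro sum.neutral ballI)
    fix m show "g j m * C m k = 0"
    proof (cases "m < p")
      case True then show ?thesis using g jk by simp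
    next
      case False then show ?thesis using C jk unfolding lower_left_zero_def by simp
    qed
  qed
qed

definition scalar_mat :: "nat \<Rightarrow> complex \<Rightarrow> cmat" where
  "scalar_mat N t = (\<lambda>i k. if i = k \<and> i < N then t else 0)"

lemma mmult_scalar_mat: "supported N d A \<Longrightarrow> mmult N (scalar_mat N t) A = (\<lambda>i k. t * A i k)"
proof (intro ext)
  fix i k assume A: "supported N d A"
  show "mmult N (scalar_mat N t) A i k = t * A i k"
  proof (cases "i < N")
    case True
    then have "mmult N (scalar_mat N t) A i k = (\<Sum>j<N. if j = i then t * A j k else 0)"
      unfolding mmult_def scalar_mat_def by (intro sum.cong) auto
    also have "\<dots> = t * A i k" using True by (simp add: sum.delta)
    finally show ?thesis .
  next
    case False
    then show ?thesis using A unfolding mmult_def scalar_mat_def supported_def by auto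
  qed
qed

definition swap_mat :: "nat \<Rightarrow> nat \<Rightarrow> cmat" where
  "swap_mat a N = (\<lambda>i k. if i < N \<and> k < N \<and> k = Transposition.transpose a (Suc a) i then 1 else 0)"

lemma transpose_less: "Suc a < N \<Longrightarrow> i < N \<Longrightarrow> Transposition.transpose a (Suc a) i < N"
  by (simp add: Transposition.transpose_def)

lemma swap_mat_mmult:
  assumes "Suc a < N" "i < N"
  shows "mmult N (swap_mat a N) C i k = C (Transposition.transpose a (Suc a) i) k"
proof -
  let ?t = "Transposition.transpose a (Suc a) i"
  have "mmult N (swap_mat a N) C i k = (\<Sum>j<N. if j = ?t then C j k else 0)"
    unfolding mmult_def swap_mat_def using assms by (intro sum.cong) auto
  also have "\<dots> = C ?t k" using transpose_less[OF assms] by (simp add: sum.delta)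
  finally show ?thesis .
qed

lemma swap_mat_invertible:
  assumes "Suc a < N" shows "Defs.invertible_mat N (swap_mat a N)"
proof (rule det_nonzero_invertible)
  show "supported N N (swap_mat a N)" unfolding supported_def swap_mat_def by auto
  let ?t = "Transposition.transpose a (Suc a)"
  have tp: "?t permutes {0..<N}" using assms by (intro permutes_swap_id) auto
  have "to_mat N (swap_mat a N) = mat N N (\<lambda>(i, j). 1\<^sub>m N $$ (?t i, j))"
    by (rule eq_matI) (auto simp: to_mat_def swap_mat_def transpose_less[OF assms])
  then have "det (to_mat N (swap_mat a N)) = of_int (sign ?t)"
    using det_permute_rows[OF one_carrier_mat tp] by simp
  then show "det (to_mat N (swap_mat a N)) \<noteq> 0" by (simp add: sign_def)
qed

lemma block_of_mono: "i \<le> k \<Longrightarrow> block_of js i \<le> block_of js k"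
  unfolding block_of_def by (induction js) auto

lemma swap_mat_levi:
  assumes "Suc a < N" "block_of js a = block_of js (Suc a)"
  shows "swap_mat a N \<in> levi N js"
  unfolding levi_def
proof (intro CollectI conjI allI impI)
  show "Defs.invertible_mat N (swap_mat a N)" by (rule swap_mat_invertible[OF assms(1)])
next
  fix i k assume "i < N" "k < N" "block_of js i \<noteq> block_of js k"
  then show "swap_mat a N i k = 0" using assms(2) unfolding swap_mat_def Transposition.transpose_def by auto
qed

lemma scalar_mat_levi: "t \<noteq> 0 \<Longrightarrow> scalar_mat N t \<in> levi N js"
  unfolding levi_def
proof (intro CollectI conjI allI impI)
  assume t: "t \<noteq> 0"
  show "Defs.invertible_mat N (scalar_mat N t)"
  proof (rule det_nonzero_invertible)
    show "supported N N (scalar_mat N t)" unfolding supported_def scalar_mat_def by auto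
    have "det (to_mat N (scalar_mat N t)) = (\<Prod>i<N. scalar_mat N t i i)" by (rule det_to_mat_upper) (simp add: scalar_mat_def)
    then show "det (to_mat N (scalar_mat N t)) \<noteq> 0" using t by (simp add: scalar_mat_def)
  qed
next
  fix i k assume "block_of js i \<noteq> block_of js k" then show "scalar_mat N t i k = 0" by (auto simp: scalar_mat_def)
qed

definition coord_frame :: "nat list \<Rightarrow> cmat" where
  "coord_frame J = (\<lambda>i k. if k < length J \<and> i = J ! k - 1 then 1 else 0)"

lemma pluecker_coord_frame:
  assumes J: "J \<in> Iseq d N" shows "pluecker J (coord_frame J) = 1"
proof -
  have lJ: "length J = d" using J by (simp add: Iseq_def)
  have inj: "\<And>r s. r < d \<Longrightarrow> s < d \<Longrightarrow> J ! r - 1 = J ! s - 1 \<Longrightarrow> r = s"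
  proof -
    fix r s assume cone_restr: "r < d" "s < d" "J ! r - 1 = J ! s - 1"
    then have "J ! r = J ! s" using Iseq_nth_ge[OF J, of r] Iseq_nth_ge[OF J, of s] by simp
    then show "r = s" using Iseq_lt[OF J, of r s] Iseq_lt[OF J, of s r] cone_restr by (cases "r < s"; cases "s < r") auto
  qed
  let ?S = "{\<sigma>. \<sigma> permutes {..<length J}}"
  let ?f = "\<lambda>\<sigma>. of_int (sign \<sigma>) * (\<Prod>r<length J. coord_frame J (J ! r - 1) (\<sigma> r))"
  have "(\<Sum>\<sigma>\<in>?S. ?f \<sigma>) = ?f id + (\<Sum>\<sigma>\<in>?S - {id}. ?f \<sigma>)"
    by (rule sum.remove) (auto simp: permutes_id finite_permutations)
  also have "(\<Sum>\<sigma>\<in>?S - {id}. ?f \<sigma>) = 0"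
  proof (rule sum.neutral, intro ballI)
    fix \<sigma> assume "\<sigma> \<in> ?S - {id}"
    then have sp: "\<sigma> permutes {..<d}" and ne: "\<sigma> \<noteq> id" using lJ by auto
    have "\<exists>r. \<sigma> r \<noteq> r" using ne by (auto simp: fun_eq_iff)
    then obtain r where r: "\<sigma> r \<noteq> r" by blast
    have "r \<in> {..<d}" using permutes_not_in[OF sp, of r] r by blast
    then have rd: "r < d" by simp
    have sd: "\<sigma> r < d" using permutes_in_image[OF sp] rd by simp
    have "coord_frame J (J ! r - 1) (\<sigma> r) = 0" using inj[OF rd sd] r unfolding coord_frame_def by auto
    then have "(\<Prod>r<length J. coord_frame J (J ! r - 1) (\<sigma> r)) = 0" using rd lJ by (intro prod_zero) auto
    then show "?f \<sigma> = 0" by simp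
  qed
  also have "?f id = 1" by (simp add: coord_frame_def)
  finally show ?thesis unfolding pluecker_def by simp
qed

section \<open>The graded coordinate ring\<close>

definition cone_restr :: "nat list \<Rightarrow> nat \<Rightarrow> nat \<Rightarrow> (cmat \<Rightarrow> complex) \<Rightarrow> (cmat \<Rightarrow> complex)" where
  "cone_restr w d N F = (\<lambda>A. if A \<in> schubert_frames w d N then F A else 0)"

definition coord_ring_deg :: "nat list \<Rightarrow> nat \<Rightarrow> nat \<Rightarrow> nat \<Rightarrow> (cmat \<Rightarrow> complex) set" where
  "coord_ring_deg w d N n = {cone_restr w d N F | F. hom_poly_fun d N n F}"

lemma coord_ring_eq_cone_restr: "coord_ring w d N = {cone_restr w d N F | F. poly_fun d N F}"
  unfolding coord_ring_def cone_restr_def by simp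

lemma schubert_frames_supported: "A \<in> schubert_frames w d N \<Longrightarrow> supported N d A"
  unfolding schubert_frames_def by simp

lemma act_cone_restr:
  assumes st: "ls_stable w d N G" and g: "g \<in> G"
  shows "act w d N g (cone_restr w d N F) = cone_restr w d N (\<lambda>A. F (mmult N g A))"
  using st g unfolding act_def cone_restr_def ls_stable_def by (auto simp: fun_eq_iff)

lemma submod_coord_ring_deg:
  assumes st: "ls_stable w d N G"
  shows "submod (coord_ring w d N) (act w d N) G (coord_ring_deg w d N n)"
  unfolding submod_def
proof (intro conjI ballI allI)
  show "coord_ring_deg w d N n \<subseteq> coord_ring w d N"
    unfolding coord_ring_deg_def coord_ring_eq_cone_restr using hom_poly_fun_imp_poly_fun by blast
  show "(\<lambda>A. 0) \<in> coord_ring_deg w d N n" unfolding coord_ring_deg_def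
    by (rule CollectI, rule exI[of _ "\<lambda>A. 0"]) (auto simp: hom_poly_fun_zero cone_restr_def)
next
  fix f h assume "f \<in> coord_ring_deg w d N n" "h \<in> coord_ring_deg w d N n"
  then obtain F H where "f = cone_restr w d N F" "h = cone_restr w d N H"
    "hom_poly_fun d N n F" "hom_poly_fun d N n H" unfolding coord_ring_deg_def by blast
  then show "(\<lambda>A. f A + h A) \<in> coord_ring_deg w d N n" unfolding coord_ring_deg_def
    by (intro CollectI exI[of _ "\<lambda>A. F A + H A"]) (auto simp: hom_poly_fun_add cone_restr_def)
next
  fix c f assume "f \<in> coord_ring_deg w d N n"
  then obtain F where "f = cone_restr w d N F" "hom_poly_fun d N n F" unfolding coord_ring_deg_def by blast
  then show "(\<lambda>A. c * f A) \<in> coord_ring_deg w d N n" unfolding coord_ring_deg_def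
    by (intro CollectI exI[of _ "\<lambda>A. c * F A"]) (auto simp: hom_poly_fun_smult cone_restr_def)
next
  fix g f assume g: "g \<in> G" and "f \<in> coord_ring_deg w d N n"
  then obtain F where "f = cone_restr w d N F" "hom_poly_fun d N n F" unfolding coord_ring_deg_def by blast
  then show "act w d N g f \<in> coord_ring_deg w d N n" unfolding coord_ring_deg_def
    using act_cone_restr[OF st g] hom_poly_fun_mmult by blast
qed

lemma coord_ring_graded_rep:
  assumes st: "ls_stable w d N G" and scG: "\<And>t. t \<noteq> 0 \<Longrightarrow> scalar_mat N t \<in> G" and d: "0 < d"
  shows "graded_rep (coord_ring w d N) (act w d N) G (coord_ring_deg w d N) (scalar_mat N) d"
proof
  fix f assume "f \<in> coord_ring w d N"
  then obtain F where F: "f = cone_restr w d N F" "poly_fun d N F" unfolding coord_ring_eq_cone_restr by blast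
  obtain M Fs where M: "\<forall>n. hom_poly_fun d N n (Fs n)" "F = (\<lambda>A. \<Sum>n<M. Fs n A)"
    using poly_fun_homogeneous_decomp[OF F(2)] by blast
  show "\<exists>M fs. (\<forall>n<M. fs n \<in> coord_ring_deg w d N n) \<and> f = (\<lambda>A. \<Sum>n<M. fs n A)"
    by (rule exI[of _ M], rule exI[of _ "\<lambda>n. cone_restr w d N (Fs n)"])
      (use F M in \<open>auto simp: coord_ring_deg_def cone_restr_def fun_eq_iff\<close>)
next
  fix t :: complex and f n assume t: "t \<noteq> 0" and "f \<in> coord_ring_deg w d N n"
  then obtain F where F: "f = cone_restr w d N F" "hom_poly_fun d N n F" unfolding coord_ring_deg_def by blast
  obtain xs where xs: "hom_poly d N n xs" "F = peval xs" using F(2) unfolding hom_poly_fun_def by blast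
  show "act w d N (scalar_mat N t) f = (\<lambda>A. t ^ (d * n) * f A)"
    unfolding F(1) act_cone_restr[OF st scG[OF t]]
    by (auto simp: cone_restr_def fun_eq_iff mmult_scalar_mat[OF schubert_frames_supported] xs peval_scale[OF xs(1)])
qed (use submod_coord_ring_deg[OF st] scG d in \<open>auto simp: act_def\<close>)

lemma orbit_frames_subset: "orbit_frames w d N \<subseteq> schubert_frames w d N"
  unfolding schubert_frames_def orbit_frames_def supported_def by auto

lemma cone_restr_eqI:
  assumes "poly_fun d N F" "poly_fun d N H" "\<And>B. B \<in> orbit_frames w d N \<Longrightarrow> F B = H B"
  shows "cone_restr w d N F = cone_restr w d N H"
proof -
  have "poly_fun d N (\<lambda>A. F A + (-1) * H A)"
  proof -
    obtain xs ys where "(\<forall>(c, Is)\<in>set xs. \<forall>I\<in>set Is. I \<in> Iseq d N)" "F = peval xs"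
      "(\<forall>(c, Is)\<in>set ys. \<forall>I\<in>set Is. I \<in> Iseq d N)" "H = peval ys"
      using assms(1,2) unfolding poly_fun_iff_peval by blast
    then show ?thesis unfolding poly_fun_iff_peval
      using peval_smult[of "-1" ys] by (intro exI[of _ "xs @ map (\<lambda>(c, Is). (-1 * c, Is)) ys"]) (auto simp: fun_eq_iff)
  qed
  moreover have "\<forall>B\<in>orbit_frames w d N. F B + (-1) * H B = 0" using assms(3) by simp
  ultimately have "\<And>A. A \<in> schubert_frames w d N \<Longrightarrow> F A + (-1) * H A = 0"
    unfolding schubert_frames_def by blast
  then show ?thesis unfolding cone_restr_def by (auto simp: fun_eq_iff)
qed

lemma cone_restr_eq_on_orbit:
  assumes "cone_restr w d N F = cone_restr w d N H" "B \<in> orbit_frames w d N" shows "F B = H B"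
  using assms orbit_frames_subset unfolding cone_restr_def by (metis (mono_tags) subsetD)


definition orbit_frame :: "nat list \<Rightarrow> nat \<Rightarrow> nat \<Rightarrow> cmat \<Rightarrow> cmat" where
  "orbit_frame w d N b = (\<lambda>i k. if i < N \<and> k < d then b i (w ! k - 1) else 0)"

lemma orbit_frames_eq_image: "orbit_frames w d N = orbit_frame w d N ` borel N"
  unfolding orbit_frames_def orbit_frame_def by auto

lemma orbit_frames_scale:
  assumes "B \<in> orbit_frames w d N" and t: "t \<noteq> 0"
  shows "(\<lambda>i k. t * B i k) \<in> orbit_frames w d N"
proof -
  obtain b where b: "b \<in> borel N" "B = orbit_frame w d N b" using assms(1) orbit_frames_eq_image by blast
  then have "(\<lambda>i k. t * B i k) = orbit_frame w d N (\<lambda>i k. t * b i k)"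
    unfolding orbit_frame_def by (auto simp: fun_eq_iff)
  then show ?thesis using borel_scale[OF b(1) t] unfolding orbit_frames_eq_image by blast
qed

lemma homogeneous_parts_vanish_on_orbit:
  assumes d: "0 < d" and Fs: "\<And>n. hom_poly_fun d N n (Fs n)"
    and van: "\<And>B. B \<in> orbit_frames w d N \<Longrightarrow> (\<Sum>n<M. Fs n B) = 0"
    and n: "n < M" and B: "B \<in> orbit_frames w d N"
  shows "Fs n B = 0"
proof -
  have "(\<Sum>n<M. Fs n B * t ^ (d * n)) = 0" if t: "t \<noteq> 0" for t :: complex
  proof -
    have "Fs m (\<lambda>i k. t * B i k) = Fs m B * t ^ (d * m)" for m
      using hom_poly_fun_scale[OF Fs, of m t B] by (simp only: mult.commute)
    then show ?thesis using van[OF orbit_frames_scale[OF B t]] by simp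
  qed
  then show ?thesis using poly_coeffs_zero[OF d, where c = "\<lambda>n. Fs n B"] n by blast
qed

section \<open>Lifting index sequences\<close>

definition lift_seq :: "nat \<Rightarrow> nat list \<Rightarrow> nat list" where
  "lift_seq p J = [1..<p+1] @ map (\<lambda>x. x + p) J"

lemma lift_seq_length[simp]: "length (lift_seq p J) = p + length J" by (simp add: lift_seq_def)

lemma lift_seq_nth_prefix: "r < p \<Longrightarrow> lift_seq p J ! r = r + 1"
  unfolding lift_seq_def by (simp add: nth_append nth_upt del: upt_Suc)

lemma lift_seq_nth_suffix: "p \<le> r \<Longrightarrow> r < p + length J \<Longrightarrow> lift_seq p J ! r = J ! (r - p) + p"
  unfolding lift_seq_def by (simp add: nth_append del: upt_Suc)

lemma lift_seq_Iseq:
  assumes "J \<in> Iseq d' N'" and "p + N' \<le> N"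
  shows "lift_seq p J \<in> Iseq (p + d') N"
  using assms by (fastforce simp: Iseq_def lift_seq_def sorted_wrt_append sorted_wrt_map)

lemma ex_lift_seq_if:
  assumes I: "I \<in> Iseq d N" and p: "p \<le> d" and prefix: "\<forall>r<p. I ! r = r + 1"
    and bd: "\<forall>x\<in>set I. x \<le> l"
  shows "\<exists>J\<in>Iseq (d - p) (l - p). I = lift_seq p J"
proof -
  have lI: "length I = d" using I by (simp add: Iseq_def)
  have "take p I = [1..<p+1]"
    using prefix lI p by (intro nth_equalityI) (auto simp: nth_upt simp del: upt_Suc)
  then have split: "I = [1..<p+1] @ drop p I" using append_take_drop_id[of p I] by simp
  have gt: "p < x" if "x \<in> set (drop p I)" for x
  proof (cases "p = 0")
    case True then show ?thesis using that I by (auto simp: Iseq_def dest: in_set_dropD)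
  next
    case False
    then have "p \<in> set [1..<p+1]" by simp
    then show ?thesis using I that split sorted_wrt_append[of "(<)" "[1..<p+1]" "drop p I"]
      by (auto simp: Iseq_def)
  qed
  define J where "J = map (\<lambda>x. x - p) (drop p I)"
  have "map (\<lambda>x. x - p + p) (drop p I) = drop p I" using gt by (intro map_idI) force
  then have "I = lift_seq p J" unfolding lift_seq_def J_def using split by (simp add: comp_def)
  moreover have "J \<in> Iseq (d - p) (l - p)"
  proof -
    have "sorted_wrt (<) (drop p I)" using I by (simp add: Iseq_def sorted_wrt_drop)
    then have "sorted_wrt (<) J"
      unfolding J_def sorted_wrt_map by (rule sorted_wrt_mono_rel[rotated]) (use gt in force)
    moreover have "1 \<le> x \<and> x \<le> l - p" if "x \<in> set J" for x
      using that gt bd unfolding J_def by (force dest: in_set_dropD)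
    ultimately show ?thesis using lI unfolding J_def Iseq_def by auto
  qed
  ultimately show ?thesis by blast
qed

definition lift_poly :: "nat \<Rightarrow> (complex \<times> nat list list) list \<Rightarrow> (complex \<times> nat list list) list" where
  "lift_poly p xs = map (\<lambda>(c, Is). (c, map (lift_seq p) Is)) xs"

lemma pluecker_mat_lift_seq:
  assumes C: "lower_left_zero p C" and J: "\<forall>r<length J. 1 \<le> J ! r"
  shows "pluecker_mat (lift_seq p J) C = four_block_mat (mat p p (\<lambda>(i, k). C i k))
    (mat p (length J) (\<lambda>(i, k). C i (k + p))) (0\<^sub>m (length J) p) (pluecker_mat J (lower_block p C))"
    (is "_ = four_block_mat ?A1 ?A2 ?A3 ?A4")
proof (rule eq_matI)
  fix i j assume "i < dim_row (four_block_mat ?A1 ?A2 ?A3 ?A4)" "j < dim_col (four_block_mat ?A1 ?A2 ?A3 ?A4)"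
  then have i: "i < p + length J" and j: "j < p + length J" by (auto simp: pluecker_mat_def)
  show "pluecker_mat (lift_seq p J) C $$ (i, j) = four_block_mat ?A1 ?A2 ?A3 ?A4 $$ (i, j)"
  proof (cases "i < p")
    case True
    then show ?thesis using i j by (auto simp: pluecker_mat_def lift_seq_nth_prefix index_mat_four_block)
  next
    case False
    have "lift_seq p J ! i - 1 = (J ! (i - p) - 1) + p"
      using lift_seq_nth_suffix[of p i J] False i J by simp
    moreover have "C ((J ! (i - p) - 1) + p) j = 0" if "j < p"
      using C that unfolding lower_left_zero_def by simp
    ultimately show ?thesis using False i j
      by (auto simp: pluecker_mat_def index_mat_four_block lower_block_def)
  qed
qed (auto simp: pluecker_mat_def)

lemma pluecker_lift_seq:
  assumes C: "lower_left_zero p C" and J: "\<forall>r<length J. 1 \<le> J ! r"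
  shows "pluecker (lift_seq p J) C = top_minor p C * pluecker J (lower_block p C)"
  unfolding pluecker_det pluecker_mat_lift_seq[OF assms] top_minor_def
  by (rule det_four_block_mat_lower_left_zero) (auto simp: pluecker_mat_def)

lemma peval_lift_poly:
  assumes C: "lower_left_zero p C" and xs: "hom_poly d' N' n xs"
  shows "peval (lift_poly p xs) C = top_minor p C ^ n * peval xs (lower_block p C)"
  using xs
proof (induction xs)
  case Nil then show ?case by (simp add: lift_poly_def)
next
  case (Cons x xs)
  obtain c Is where x: "x = (c, Is)" by fastforce
  have h: "length Is = n" "\<forall>I\<in>set Is. I \<in> Iseq d' N'" "hom_poly d' N' n xs" using Cons.prems x unfolding hom_poly_def by auto
  have "(\<Prod>I\<leftarrow>map (lift_seq p) Is. pluecker I C) = top_minor p C ^ length Is * (\<Prod>I\<leftarrow>Is. pluecker I (lower_block p C))"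
    using h(2)
  proof (induction Is)
    case Nil then show ?case by simp
  next
    case (Cons I Is)
    have "\<forall>r<length I. 1 \<le> I ! r" using Cons.prems Iseq_nth_ge[of I d' N'] by (auto simp: Iseq_def)
    then show ?case using Cons pluecker_lift_seq[OF C] by simp
  qed
  then show ?case using Cons.IH[OF h(3)] x h(1) by (simp add: lift_poly_def algebra_simps)
qed

section \<open>The reduction of \<open>w\<close>\<close>

definition bump_entry :: "nat \<Rightarrow> nat list \<Rightarrow> nat list" where
  "bump_entry a w = map (\<lambda>x. if x = a + 1 then a + 2 else x) w"

lemma bump_entry_Iseq:
  assumes "w \<in> Iseq d N" and "a + 2 \<notin> set w" and "Suc a < N"
  shows "bump_entry a w \<in> Iseq d N"
proof -
  have "sorted_wrt (<) (bump_entry a w)"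
    unfolding bump_entry_def sorted_wrt_map using assms(1,2)
    by (auto simp: Iseq_def elim!: sorted_wrt_mono_rel[rotated] intro: Suc_lessI)
  then show ?thesis using assms by (auto simp: Iseq_def bump_entry_def)
qed

lemma swap_mat_orbit_frame_idm:
  assumes w: "w \<in> Iseq d N" and a: "a + 2 \<notin> set w" "Suc a < N"
  shows "\<forall>i<N. \<forall>k<d. mmult N (swap_mat a N) (orbit_frame w d N (idm N)) i k = coord_frame (bump_entry a w) i k"
proof (intro allI impI)
  fix i k assume i: "i < N" and k: "k < d"
  let ?t = "Transposition.transpose a (Suc a) i"
  have lw: "length w = d" using w by (simp add: Iseq_def)
  have wk: "1 \<le> w ! k" "w ! k \<le> N" "w ! k \<noteq> a + 2"
    using Iseq_nth_ge[OF w k] Iseq_nth_le[OF w k] a(1) k lw nth_mem by fastforce+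
  have "mmult N (swap_mat a N) (orbit_frame w d N (idm N)) i k = (if ?t = w ! k - 1 then 1 else 0)"
    using swap_mat_mmult[OF a(2) i] transpose_less[OF a(2) i] k wk
    unfolding orbit_frame_def idm_def by auto
  also have "(?t = w ! k - 1) \<longleftrightarrow> (i = bump_entry a w ! k - 1)"
    using wk k lw unfolding bump_entry_def Transposition.transpose_def by auto
  finally show "mmult N (swap_mat a N) (orbit_frame w d N (idm N)) i k = coord_frame (bump_entry a w) i k"
    unfolding coord_frame_def bump_entry_def using k lw by simp
qed

locale schubert_reduction =
  fixes w :: "nat list" and d N :: nat
  assumes wI: "w \<in> Iseq d N" and d1: "1 \<le> d" and dN: "d < N" and wne: "w \<noteq> [1..<d+1]"
begin

abbreviation "p \<equiv> red_p w"

abbreviation "l \<equiv> last w"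

abbreviation "N' \<equiv> red_N w"

abbreviation "d' \<equiv> red_d w"

abbreviation "w' \<equiv> red_w w"

lemma length_w: "length w = d" using wI by (simp add: Iseq_def)

lemma last_w_eq_nth: "l = w ! (d - 1)"
proof -
  have "w \<noteq> []" using length_w d1 by auto
  then show ?thesis using length_w by (simp add: last_conv_nth)
qed

lemma w_nth_le_last: "i < d \<Longrightarrow> w ! i \<le> l"
proof -
  assume i: "i < d"
  then have "i = d - 1 \<or> i < d - 1" by arith
  then show ?thesis
  proof
    assume "i < d - 1" then show ?thesis using Iseq_lt[OF wI, of i "d - 1"] last_w_eq_nth d1 by simp
  qed (use last_w_eq_nth in simp)
qed

lemma last_w_le: "l \<le> N" using Iseq_nth_le[OF wI, of "d - 1"] last_w_eq_nth d1 by simp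

definition "fixed_prefix q \<longleftrightarrow> q \<le> length w \<and> (\<forall>i. 1 \<le> i \<and> i \<le> q \<longrightarrow> w ! (i - 1) = i)"

lemma red_p_eq_Greatest: "p = Greatest fixed_prefix" unfolding red_p_def fixed_prefix_def by simp

lemma red_p_prop: "p \<le> d \<and> (\<forall>i. 1 \<le> i \<and> i \<le> p \<longrightarrow> w ! (i - 1) = i)"
proof -
  have "fixed_prefix (Greatest fixed_prefix)" by (rule GreatestI_nat[of fixed_prefix 0 "length w"]) (auto simp: fixed_prefix_def)
  then show ?thesis unfolding red_p_eq_Greatest fixed_prefix_def using length_w by simp
qed

lemma w_nth_prefix: "i < p \<Longrightarrow> w ! i = i + 1"
  using red_p_prop[THEN conjunct2, rule_format, of "i + 1"] by simp

lemma red_p_less: "p < d"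
proof (rule ccontr)
  assume "\<not> p < d"
  then have "p = d" using red_p_prop by simp
  then have "w = [1..<d+1]" using w_nth_prefix length_w by (intro nth_equalityI) (auto simp: nth_upt simp del: upt_Suc)
  with wne show False by simp
qed

lemma w_nth_red_p: "p + 1 < w ! p"
proof -
  have ge: "p + 1 \<le> w ! p" using Iseq_nth_ge[OF wI red_p_less] .
  have "w ! p \<noteq> p + 1"
  proof
    assume eq: "w ! p = p + 1"
    have "p + 1 \<le> d \<and> (\<forall>i. 1 \<le> i \<and> i \<le> p + 1 \<longrightarrow> w ! (i - 1) = i)"
    proof (intro conjI allI impI)
      show "p + 1 \<le> d" using red_p_less by simp
    next
      fix i assume "1 \<le> i \<and> i \<le> p + 1"
      then show "w ! (i - 1) = i" using eq w_nth_prefix[of "i - 1"] by (cases "i = p + 1") auto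
    qed
    then have "fixed_prefix (p + 1)" unfolding fixed_prefix_def using length_w by simp
    then have "p + 1 \<le> Greatest fixed_prefix" by (rule Greatest_le_nat[of fixed_prefix _ "length w"]) (auto simp: fixed_prefix_def)
    then have "p + 1 \<le> p" unfolding red_p_eq_Greatest .
    then show False by simp
  qed
  with ge show ?thesis by simp
qed

lemma last_w_ge: "d + 1 \<le> l"
proof -
  have "w ! p + (d - 1 - p) \<le> w ! (d - 1)" using Iseq_gap[OF wI, of p "d - 1"] red_p_less by simp
  then show ?thesis using w_nth_red_p last_w_eq_nth red_p_less by simp
qed

lemma red_N_eq: "N' = l - p" by (simp add: red_N_def)

lemma red_d_eq: "d' = d - p" by (simp add: red_d_def length_w)

lemma red_p_add_red_N: "p + N' = l" using red_N_eq last_w_ge red_p_less by simp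

lemma red_p_add_red_d: "p + d' = d" using red_d_eq red_p_less by simp

lemma red_d_pos: "0 < d'" using red_d_eq red_p_less by simp

lemma red_w_nth: "k < d' \<Longrightarrow> w' ! k = w ! (k + p) - p"
  by (simp add: red_w_def red_d_eq length_w add.commute)

lemma w_nth_gt_red_p: "p \<le> k \<Longrightarrow> k < d \<Longrightarrow> p + 1 < w ! k"
  using w_nth_red_p Iseq_gap[OF wI, of p k] by simp

lemma lift_seq_Iseq_red: "J \<in> Iseq d' N' \<Longrightarrow> lift_seq p J \<in> Iseq d N"
  using lift_seq_Iseq[of J d' N' p N] red_p_add_red_N last_w_le red_p_add_red_d by simp

lemma lift_seq_le_last: "J \<in> Iseq d' N' \<Longrightarrow> r < d \<Longrightarrow> lift_seq p J ! r \<le> l"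
proof -
  assume J: "J \<in> Iseq d' N'" and r: "r < d"
  have lJ: "length J = d'" using J by (simp add: Iseq_def)
  show ?thesis
  proof (cases "r < p")
    case True then show ?thesis using lift_seq_nth_prefix red_p_add_red_N by simp
  next
    case False
    then have "lift_seq p J ! r = J ! (r - p) + p" using r lJ red_p_add_red_d by (simp add: lift_seq_nth_suffix)
    moreover have "J ! (r - p) \<le> N'" using Iseq_nth_le[OF J] r False red_p_add_red_d by simp
    ultimately show ?thesis using red_p_add_red_N by simp
  qed
qed

lemma hom_poly_lift_poly_red: "hom_poly d' N' n xs \<Longrightarrow> hom_poly d N n (lift_poly p xs)"
  unfolding hom_poly_def lift_poly_def using lift_seq_Iseq_red by fastforce

lemma orbit_frame_lower_left_zero: "upper_tri b \<Longrightarrow> lower_left_zero p (orbit_frame w d N b)"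
  unfolding lower_left_zero_def orbit_frame_def upper_tri_def using w_nth_prefix red_p_less by auto

lemma orbit_frame_zero_rows: "upper_tri b \<Longrightarrow> zero_rows_from l (orbit_frame w d N b)"
  unfolding zero_rows_from_def orbit_frame_def upper_tri_def
proof (intro allI impI)
  fix j k assume u: "\<forall>i j. j < i \<longrightarrow> b i j = 0" and j: "l \<le> j"
  show "(if j < N \<and> k < d then b j (w ! k - 1) else 0) = 0"
  proof (cases "k < d")
    case True
    then have "w ! k - 1 < j" using w_nth_le_last[OF True] Iseq_nth_ge[OF wI True] j by simp
    then show ?thesis using u by simp
  qed simp
qed

lemma top_minor_orbit_frame: "top_minor p (orbit_frame w d N b) = top_minor p b"
proof -
  have "mat p p (\<lambda>(i, k). orbit_frame w d N b i k) = mat p p (\<lambda>(i, k). b i k)"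
    using w_nth_prefix red_p_less dN by (intro eq_matI) (auto simp: orbit_frame_def)
  then show ?thesis by (simp add: top_minor_def)
qed

lemma lower_block_orbit_frame:
  "\<forall>i<N'. \<forall>k<d'. lower_block p (orbit_frame w d N b) i k = orbit_frame w' d' N' (principal_sub p N' b) i k"
proof (intro allI impI)
  fix i k assume i: "i < N'" and k: "k < d'"
  have kd: "k + p < d" using k red_p_add_red_d by simp
  have ip: "i + p < N" using i red_p_add_red_N last_w_le by simp
  have g: "p + 1 < w ! (k + p)" using w_nth_gt_red_p[of "k + p"] kd by simp
  have le: "w ! (k + p) \<le> l" using w_nth_le_last[OF kd] .
  have "w' ! k - 1 < N'" using red_w_nth[OF k] g le red_p_add_red_N by simp
  moreover have "w' ! k - 1 + p = w ! (k + p) - 1" using red_w_nth[OF k] g by simp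
  ultimately show "lower_block p (orbit_frame w d N b) i k = orbit_frame w' d' N' (principal_sub p N' b) i k"
    using i k kd ip by (simp add: lower_block_def orbit_frame_def principal_sub_def)
qed

lemma principal_sub_borel: "b \<in> borel N \<Longrightarrow> principal_sub p N' b \<in> borel N'"
  unfolding borel_iff principal_sub_def supported_def using red_p_add_red_N last_w_le by auto

lemma ex_borel_principal_sub:
  assumes b': "b' \<in> borel N'"
  shows "\<exists>b\<in>borel N. principal_sub p N' b = b' \<and> top_minor p b = 1"
proof -
  have bb: "supported N' N' b'" "\<forall>i j. j < i \<longrightarrow> b' i j = 0" "\<forall>i<N'. b' i i \<noteq> 0"
    using b' unfolding borel_iff by auto
  define b where "b = (\<lambda>i k. if p \<le> i \<and> i < l \<and> p \<le> k \<and> k < l then b' (i - p) (k - p) else idm N i k)"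
  have "b \<in> borel N" unfolding borel_iff
  proof (intro conjI allI impI)
    show "supported N N b" unfolding supported_def b_def idm_def using last_w_le by auto
  next
    fix i j :: nat assume "j < i" then show "b i j = 0" using bb(2) unfolding b_def idm_def by auto
  next
    fix i assume "i < N" then show "b i i \<noteq> 0" using bb(3) red_p_add_red_N unfolding b_def idm_def by auto
  qed
  moreover have "principal_sub p N' b = b'"
  proof (intro ext)
    fix i k show "principal_sub p N' b i k = b' i k"
      using bb(1) red_p_add_red_N unfolding principal_sub_def b_def supported_def by auto
  qed
  moreover have "top_minor p b = 1"
  proof -
    have "top_minor p b = top_minor p (idm N)" unfolding top_minor_def b_def by (intro arg_cong[of _ _ det] eq_matI) auto
    then show ?thesis using top_minor_idm red_p_less dN by simp
  qed
  ultimately show ?thesis by blast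
qed

lemma principal_sub_scalar_mat: "principal_sub p N' (scalar_mat N t) = scalar_mat N' t"
  unfolding principal_sub_def scalar_mat_def using red_p_add_red_N last_w_le by (auto simp: fun_eq_iff)

lemma pluecker_orbit_frame_unlifted:
  assumes b: "upper_tri b" and I: "I \<in> Iseq d N" and nl: "\<not> (\<exists>J\<in>Iseq d' N'. I = lift_seq p J)"
  shows "pluecker I (orbit_frame w d N b) = 0"
proof -
  have lI: "length I = d" using I by (simp add: Iseq_def)
  have ub: "\<And>i j. j < i \<Longrightarrow> b i j = 0" using b unfolding upper_tri_def by blast
  have "\<not> ((\<forall>r<p. I ! r = r + 1) \<and> (\<forall>x\<in>set I. x \<le> l))"
    using ex_lift_seq_if[OF I less_imp_le[OF red_p_less], where l = "last w"] nl red_d_eq red_N_eq by auto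
  then consider (big) r where "r < d" "l < I ! r" | (gap) r where "r < p" "I ! r \<noteq> r + 1"
    using lI by (force simp: in_set_conv_nth)
  then show ?thesis
  proof cases
    case big
    show ?thesis
    proof (rule pluecker_eq_0_if_zero_entry)
      fix \<sigma> assume "\<sigma> permutes {..<length I}"
      then have s: "\<sigma> r < d" using permutes_in_image big(1) lI by fastforce
      then have "w ! \<sigma> r - 1 < I ! r - 1" using w_nth_le_last[OF s] big(2) Iseq_nth_ge[OF wI s] by simp
      then show "\<exists>r<length I. orbit_frame w d N b (I ! r - 1) (\<sigma> r) = 0"
        using ub big(1) lI unfolding orbit_frame_def by auto
    qed
  next
    case gap
    have I_ge: "s + 2 \<le> I ! s" if "r \<le> s" "s < d" for s
      using Iseq_gap[OF I that] Iseq_nth_ge[OF I, of r] gap that by linarith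
    show ?thesis
    proof (rule pluecker_eq_0_if_zero_entry)
      fix \<sigma> assume "\<sigma> permutes {..<length I}"
      then obtain s where s: "r \<le> s" "s < d" "\<sigma> s \<le> r"
        using permutes_ex_ge_le gap(1) red_p_less lI by (metis order.strict_trans)
      then have "w ! \<sigma> s = \<sigma> s + 1" using w_nth_prefix gap(1) by simp
      then show "\<exists>r<length I. orbit_frame w d N b (I ! r - 1) (\<sigma> r) = 0"
        using I_ge[OF s(1,2)] s ub lI unfolding orbit_frame_def by (intro exI[of _ s]) auto
    qed
  qed
qed

lemma block_boundary_if_unlifted:
  assumes st: "ls_stable w d N (levi N js)" and a: "a + 2 \<notin> set w" "Suc a < N"
    and nl: "\<not> (\<exists>J\<in>Iseq d' N'. bump_entry a w = lift_seq p J)"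
  shows "block_of js a \<noteq> block_of js (Suc a)"
proof
  assume "block_of js a = block_of js (Suc a)"
  then have swap: "swap_mat a N \<in> levi N js" using swap_mat_levi[OF a(2)] by blast
  let ?J = "bump_entry a w" and ?B = "orbit_frame w d N (idm N)"
  have J: "?J \<in> Iseq d N" using bump_entry_Iseq[OF wI a] .
  have "mmult N (swap_mat a N) ?B \<in> schubert_frames w d N"
    using st swap orbit_frames_subset idm_borel unfolding ls_stable_def orbit_frames_eq_image by blast
  moreover have "\<forall>B\<in>orbit_frames w d N. pluecker ?J B = 0"
    using pluecker_orbit_frame_unlifted[OF borel_upper_tri J nl] unfolding orbit_frames_eq_image by blast
  ultimately have "pluecker ?J (mmult N (swap_mat a N) ?B) = 0"
    using hom_poly_fun_imp_poly_fun[OF hom_poly_fun_pluecker[OF J]] unfolding schubert_frames_def by blast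
  moreover have "pluecker ?J (mmult N (swap_mat a N) ?B) = pluecker ?J (coord_frame ?J)"
    by (rule pluecker_agree[OF J swap_mat_orbit_frame_idm[OF wI a]])
  ultimately show False using pluecker_coord_frame[OF J] by simp
qed

lemma block_boundary_red_p:
  assumes st: "ls_stable w d N (levi N js)" and p0: "0 < p"
  shows "block_of js (p - 1) \<noteq> block_of js p"
proof -
  have "p + 1 \<notin> set w"
  proof
    assume "p + 1 \<in> set w"
    then obtain k where "k < d" "w ! k = p + 1" using length_w by (auto simp: in_set_conv_nth)
    then show False using w_nth_prefix[of k] w_nth_gt_red_p[of k] by (cases "k < p") auto
  qed
  moreover have "bump_entry (p - 1) w ! (p - 1) \<noteq> lift_seq p J ! (p - 1)" for J
    using p0 w_nth_prefix[of "p - 1"] red_p_less length_w lift_seq_nth_prefix[of "p - 1" p J]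
    by (simp add: bump_entry_def)
  ultimately show ?thesis
    using block_boundary_if_unlifted[OF st, of "p - 1"] p0 red_p_less dN by force
qed

lemma block_boundary_last:
  assumes st: "ls_stable w d N (levi N js)" and lN: "l < N"
  shows "block_of js (l - 1) \<noteq> block_of js l"
proof -
  have l1: "1 \<le> l" using last_w_ge by simp
  have "l + 1 \<notin> set w" using w_nth_le_last length_w by (force simp: in_set_conv_nth)
  moreover have "bump_entry (l - 1) w ! (d - 1) \<noteq> lift_seq p J ! (d - 1)" if "J \<in> Iseq d' N'" for J
    using last_w_eq_nth length_w d1 l1 lift_seq_le_last[OF that, of "d - 1"]
    by (simp add: bump_entry_def)
  ultimately show ?thesis
    using block_boundary_if_unlifted[OF st, of "l - 1"] l1 lN by force
qed

lemma levi_block_split: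
  assumes st: "ls_stable w d N (levi N js)" and g: "g \<in> levi N js" and s: "s = p \<or> s = l"
  shows "\<forall>i k. i < s \<longrightarrow> s \<le> k \<longrightarrow> g i k = 0 \<and> g k i = 0"
proof (intro allI impI)
  fix i k assume ik: "i < s" "s \<le> k"
  have sup: "supported N N g" using g unfolding levi_def Defs.invertible_mat_def by auto
  show "g i k = 0 \<and> g k i = 0"
  proof (cases "k < N")
    case False then show ?thesis using sup unfolding supported_def by auto
  next
    case True
    have s0: "0 < s" using ik by simp
    have bs: "block_of js (s - 1) \<noteq> block_of js s"
      using s block_boundary_red_p[OF st] block_boundary_last[OF st] s0 True ik by auto
    have "block_of js i \<le> block_of js (s - 1)" using ik by (intro block_of_mono) simp
    moreover have "block_of js (s - 1) \<le> block_of js s" by (intro block_of_mono) simp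
    moreover have "block_of js s \<le> block_of js k" using ik by (intro block_of_mono) simp
    ultimately have "block_of js i \<noteq> block_of js k" using bs by simp
    moreover have "i < N" using ik True by simp
    ultimately show ?thesis using g True unfolding levi_def by auto
  qed
qed

lemma top_minor_levi_nonzero:
  assumes st: "ls_stable w d N (levi N js)" and g: "g \<in> levi N js"
  shows "top_minor p g \<noteq> 0"
proof -
  obtain h where h: "mmult N h g = idm N" using g unfolding levi_def Defs.invertible_mat_def by blast
  have "lower_left_zero p g" unfolding lower_left_zero_def using levi_block_split[OF st g, of p] by auto
  then have "top_minor p (mmult N h g) = top_minor p h * top_minor p g" using top_minor_mmult red_p_less dN by simp
  then have "top_minor p h * top_minor p g = 1" using h top_minor_idm red_p_less dN by simp
  then show ?thesis by auto
qed

lemma lower_block_mmult: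
  assumes g: "\<forall>i j. p \<le> i \<longrightarrow> j < p \<longrightarrow> g i j = 0" and C: "zero_rows_from l C" and i: "i < N'"
  shows "lower_block p (mmult N g C) i k = mmult N' (principal_sub p N' g) (lower_block p C) i k"
proof -
  have "lower_block p (mmult N g C) i k = (\<Sum>j<N. g (i + p) j * C j (k + p))"
    by (simp add: lower_block_def mmult_def)
  also have "\<dots> = (\<Sum>j\<in>{p..<N' + p}. g (i + p) j * C j (k + p))"
  proof (rule sum.mono_neutral_right)
    show "{p..<N' + p} \<subseteq> {..<N}" using red_p_add_red_N last_w_le by auto
    show "\<forall>j\<in>{..<N} - {p..<N' + p}. g (i + p) j * C j (k + p) = 0"
    proof
      fix j assume "j \<in> {..<N} - {p..<N' + p}"
      then have "j < p \<or> l \<le> j" using red_p_add_red_N by auto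
      then show "g (i + p) j * C j (k + p) = 0" using g C unfolding zero_rows_from_def by auto
    qed
  qed simp
  also have "\<dots> = (\<Sum>j\<in>{0..<N'}. g (i + p) (j + p) * C (j + p) (k + p))"
    using sum.shift_bounds_nat_ivl[of "\<lambda>j. g (i + p) j * C j (k + p)" 0 p N'] by simp
  also have "\<dots> = mmult N' (principal_sub p N' g) (lower_block p C) i k"
    unfolding mmult_def principal_sub_def lower_block_def using i by (simp add: atLeast0LessThan)
  finally show ?thesis .
qed

lemma lower_block_mmult_orbit_frame:
  assumes st: "ls_stable w d N (levi N js)" and g: "g \<in> levi N js" and b: "b \<in> borel N"
  shows "\<forall>i<N'. \<forall>k<d'. lower_block p (mmult N g (orbit_frame w d N b)) i k =
           mmult N' (principal_sub p N' g) (orbit_frame w' d' N' (principal_sub p N' b)) i k"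
proof (intro allI impI)
  fix i k assume i: "i < N'" and k: "k < d'"
  have gz: "\<forall>i j. p \<le> i \<longrightarrow> j < p \<longrightarrow> g i j = 0" using levi_block_split[OF st g, of p] by auto
  have "lower_block p (mmult N g (orbit_frame w d N b)) i k = mmult N' (principal_sub p N' g) (lower_block p (orbit_frame w d N b)) i k"
    by (rule lower_block_mmult[OF gz orbit_frame_zero_rows[OF borel_upper_tri[OF b]] i])
  also have "\<dots> = mmult N' (principal_sub p N' g) (orbit_frame w' d' N' (principal_sub p N' b)) i k"
    using mmult_agree[OF lower_block_orbit_frame] i k by blast
  finally show "lower_block p (mmult N g (orbit_frame w d N b)) i k = mmult N' (principal_sub p N' g) (orbit_frame w' d' N' (principal_sub p N' b)) i k" .
qed

lemma lower_left_zero_mmult_orbit_frame: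
  assumes st: "ls_stable w d N (levi N js)" and g: "g \<in> levi N js" and b: "b \<in> borel N"
  shows "lower_left_zero p (mmult N g (orbit_frame w d N b))"
proof -
  have gz: "\<forall>i j. p \<le> i \<longrightarrow> j < p \<longrightarrow> g i j = 0" using levi_block_split[OF st g, of p] by auto
  show ?thesis by (rule lower_left_zero_mmult[OF gz orbit_frame_lower_left_zero[OF borel_upper_tri[OF b]]])
qed

lemma top_minor_mmult_orbit_frame:
  assumes b: "b \<in> borel N"
  shows "top_minor p (mmult N g (orbit_frame w d N b)) = top_minor p g * top_minor p b"
  using top_minor_mmult[OF orbit_frame_lower_left_zero[OF borel_upper_tri[OF b]]] red_p_less dN top_minor_orbit_frame by simp

lemma peval_lift_poly_orbit_frame:
  assumes b: "b \<in> borel N" and xs: "hom_poly d' N' n xs"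
  shows "peval (lift_poly p xs) (orbit_frame w d N b) = top_minor p b ^ n * peval xs (orbit_frame w' d' N' (principal_sub p N' b))"
proof -
  have "peval (lift_poly p xs) (orbit_frame w d N b) = top_minor p (orbit_frame w d N b) ^ n * peval xs (lower_block p (orbit_frame w d N b))"
    by (rule peval_lift_poly[OF orbit_frame_lower_left_zero[OF borel_upper_tri[OF b]] xs])
  also have "peval xs (lower_block p (orbit_frame w d N b)) = peval xs (orbit_frame w' d' N' (principal_sub p N' b))"
    by (rule peval_agree[OF xs lower_block_orbit_frame])
  finally show ?thesis using top_minor_orbit_frame by simp
qed

lemma peval_lift_poly_mmult_orbit_frame:
  assumes st: "ls_stable w d N (levi N js)" and g: "g \<in> levi N js" and b: "b \<in> borel N" and xs: "hom_poly d' N' n xs"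
  shows "peval (lift_poly p xs) (mmult N g (orbit_frame w d N b)) =
      (top_minor p g * top_minor p b) ^ n * peval xs (mmult N' (principal_sub p N' g) (orbit_frame w' d' N' (principal_sub p N' b)))"
proof -
  have "peval (lift_poly p xs) (mmult N g (orbit_frame w d N b)) = top_minor p (mmult N g (orbit_frame w d N b)) ^ n * peval xs (lower_block p (mmult N g (orbit_frame w d N b)))"
    by (rule peval_lift_poly[OF lower_left_zero_mmult_orbit_frame[OF st g b] xs])
  also have "peval xs (lower_block p (mmult N g (orbit_frame w d N b))) = peval xs (mmult N' (principal_sub p N' g) (orbit_frame w' d' N' (principal_sub p N' b)))"
    by (rule peval_agree[OF xs lower_block_mmult_orbit_frame[OF st g b]])
  finally show ?thesis using top_minor_mmult_orbit_frame[OF b] by simp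
qed

lemma peval_mmult_red_orbit_eq_0:
  assumes st: "ls_stable w d N (levi N js)" and g: "g \<in> levi N js" and xs: "hom_poly d' N' n xs"
    and van: "\<forall>B'\<in>orbit_frames w' d' N'. peval xs B' = 0" and B': "B' \<in> orbit_frames w' d' N'"
  shows "peval xs (mmult N' (principal_sub p N' g) B') = 0"
proof -
  obtain b' where b': "b' \<in> borel N'" "B' = orbit_frame w' d' N' b'"
    using B' unfolding orbit_frames_eq_image by blast
  obtain b where b: "b \<in> borel N" "principal_sub p N' b = b'" "top_minor p b = 1"
    using ex_borel_principal_sub[OF b'(1)] by blast
  have lifted_van: "\<forall>B\<in>orbit_frames w d N. peval (lift_poly p xs) B = 0"
  proof
    fix B assume "B \<in> orbit_frames w d N"
    then obtain c where c: "c \<in> borel N" "B = orbit_frame w d N c" unfolding orbit_frames_eq_image by blast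
    then have "orbit_frame w' d' N' (principal_sub p N' c) \<in> orbit_frames w' d' N'"
      unfolding orbit_frames_eq_image using principal_sub_borel by blast
    then show "peval (lift_poly p xs) B = 0" using van peval_lift_poly_orbit_frame[OF c(1) xs] c(2) by simp
  qed
  have "mmult N g (orbit_frame w d N b) \<in> schubert_frames w d N"
    using st g b(1) orbit_frames_subset unfolding ls_stable_def orbit_frames_eq_image by blast
  then have "peval (lift_poly p xs) (mmult N g (orbit_frame w d N b)) = 0"
    using lifted_van hom_poly_imp_poly_fun[OF hom_poly_lift_poly_red[OF xs]]
    unfolding schubert_frames_def by blast
  then have "(top_minor p g * top_minor p b) ^ n * peval xs (mmult N' (principal_sub p N' g) B') = 0"
    using peval_lift_poly_mmult_orbit_frame[OF st g b(1) xs] b(2) b'(2) by simp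
  then show ?thesis using b(3) top_minor_levi_nonzero[OF st g] by simp
qed

lemma ls_stable_reduction:
  assumes st: "ls_stable w d N (levi N js)"
  shows "ls_stable w' d' N' (red_L w (levi N js))"
  unfolding ls_stable_def
proof (intro ballI)
  fix g' A' assume g': "g' \<in> red_L w (levi N js)" and A': "A' \<in> schubert_frames w' d' N'"
  obtain g where g: "g \<in> levi N js" "g' = principal_sub p N' g" using g' unfolding red_L_def by blast
  show "mmult N' g' A' \<in> schubert_frames w' d' N'"
    unfolding schubert_frames_def
  proof (intro CollectI conjI allI impI)
    show "supported N' d' (mmult N' g' A')"
      using supported_mmult[OF _ schubert_frames_supported[OF A']] supported_principal_sub g(2) by blast
  next
    fix F' assume F': "poly_fun d' N' F' \<and> (\<forall>B\<in>orbit_frames w' d' N'. F' B = 0)"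
    obtain M Fs where M: "\<And>n. hom_poly_fun d' N' n (Fs n)" "F' = (\<lambda>A. \<Sum>n<M. Fs n A)"
      using poly_fun_homogeneous_decomp F' by blast
    have "Fs n (mmult N' g' B') = 0" if "n < M" "B' \<in> orbit_frames w' d' N'" for n B'
    proof -
      obtain xs where xs: "hom_poly d' N' n xs" "Fs n = peval xs"
        using M(1) unfolding hom_poly_fun_def by blast
      have "\<forall>B'\<in>orbit_frames w' d' N'. peval xs B' = 0"
        using homogeneous_parts_vanish_on_orbit[OF red_d_pos M(1) _ that(1), where w = w'] F' M(2) xs(2) by simp
      then show ?thesis using peval_mmult_red_orbit_eq_0[OF st g(1) xs(1) _ that(2)] g(2) xs(2) by simp
    qed
    then have "\<forall>B'\<in>orbit_frames w' d' N'. F' (mmult N' g' B') = 0" using M(2) by simp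
    moreover have "poly_fun d' N' (\<lambda>A. F' (mmult N' g' A))" using poly_fun_mmult F' by blast
    ultimately show "F' (mmult N' g' A') = 0" using A' unfolding schubert_frames_def by blast
  qed
qed

end

section \<open>The lifting isomorphism\<close>

locale stable_levi_reduction = schubert_reduction +
  fixes js :: "nat list"
  assumes st: "ls_stable w d N (levi N js)"
begin

abbreviation "L \<equiv> levi N js"

abbreviation "L' \<equiv> red_L w (levi N js)"

lemma red_stable: "ls_stable w' d' N' L'" by (rule ls_stable_reduction[OF st])

definition lifts :: "nat \<Rightarrow> (cmat \<Rightarrow> complex) \<Rightarrow> (cmat \<Rightarrow> complex) \<Rightarrow> bool" where
  "lifts n f' f \<longleftrightarrow> (\<exists>xs. hom_poly d' N' n xs \<and> f' = cone_restr w' d' N' (peval xs) \<and> f = cone_restr w d N (peval (lift_poly p xs)))"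

definition lift_fun :: "nat \<Rightarrow> (cmat \<Rightarrow> complex) \<Rightarrow> (cmat \<Rightarrow> complex)" where
  "lift_fun n f' = (SOME f. lifts n f' f)"

lemma lifts_unique:
  assumes "lifts n f' f1" "lifts n f' f2" shows "f1 = f2"
proof -
  obtain xs1 where x1: "hom_poly d' N' n xs1" "f' = cone_restr w' d' N' (peval xs1)" "f1 = cone_restr w d N (peval (lift_poly p xs1))"
    using assms(1) unfolding lifts_def by blast
  obtain xs2 where x2: "hom_poly d' N' n xs2" "f' = cone_restr w' d' N' (peval xs2)" "f2 = cone_restr w d N (peval (lift_poly p xs2))"
    using assms(2) unfolding lifts_def by blast
  have "cone_restr w d N (peval (lift_poly p xs1)) = cone_restr w d N (peval (lift_poly p xs2))"
  proof (rule cone_restr_eqI[OF hom_poly_imp_poly_fun[OF hom_poly_lift_poly_red[OF x1(1)]] hom_poly_imp_poly_fun[OF hom_poly_lift_poly_red[OF x2(1)]]])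
    fix B assume "B \<in> orbit_frames w d N"
    then obtain b where b: "b \<in> borel N" "B = orbit_frame w d N b" unfolding orbit_frames_eq_image by blast
    have o: "orbit_frame w' d' N' (principal_sub p N' b) \<in> orbit_frames w' d' N'"
      unfolding orbit_frames_eq_image using principal_sub_borel[OF b(1)] by blast
    have "peval xs1 (orbit_frame w' d' N' (principal_sub p N' b)) = peval xs2 (orbit_frame w' d' N' (principal_sub p N' b))"
      using cone_restr_eq_on_orbit[OF _ o] x1(2) x2(2) by metis
    then show "peval (lift_poly p xs1) B = peval (lift_poly p xs2) B"
      using peval_lift_poly_orbit_frame[OF b(1) x1(1)] peval_lift_poly_orbit_frame[OF b(1) x2(1)] b(2) by simp
  qed
  then show ?thesis using x1 x2 by simp
qed

lemma lifts_inj: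
  assumes "lifts n f1' f" "lifts n f2' f" shows "f1' = f2'"
proof -
  obtain xs1 where x1: "hom_poly d' N' n xs1" "f1' = cone_restr w' d' N' (peval xs1)" "f = cone_restr w d N (peval (lift_poly p xs1))"
    using assms(1) unfolding lifts_def by blast
  obtain xs2 where x2: "hom_poly d' N' n xs2" "f2' = cone_restr w' d' N' (peval xs2)" "f = cone_restr w d N (peval (lift_poly p xs2))"
    using assms(2) unfolding lifts_def by blast
  have "cone_restr w' d' N' (peval xs1) = cone_restr w' d' N' (peval xs2)"
  proof (rule cone_restr_eqI[OF hom_poly_imp_poly_fun[OF x1(1)] hom_poly_imp_poly_fun[OF x2(1)]])
    fix B' assume "B' \<in> orbit_frames w' d' N'"
    then obtain b' where b': "b' \<in> borel N'" "B' = orbit_frame w' d' N' b'" unfolding orbit_frames_eq_image by blast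
    obtain b where b: "b \<in> borel N" "principal_sub p N' b = b'" "top_minor p b = 1" using ex_borel_principal_sub[OF b'(1)] by blast
    have o: "orbit_frame w d N b \<in> orbit_frames w d N" unfolding orbit_frames_eq_image using b(1) by blast
    have "peval (lift_poly p xs1) (orbit_frame w d N b) = peval (lift_poly p xs2) (orbit_frame w d N b)"
      using cone_restr_eq_on_orbit[OF _ o] x1(3) x2(3) by metis
    then show "peval xs1 B' = peval xs2 B'"
      using peval_lift_poly_orbit_frame[OF b(1) x1(1)] peval_lift_poly_orbit_frame[OF b(1) x2(1)] b b'(2) by simp
  qed
  then show ?thesis using x1 x2 by simp
qed

lemma lifts_deg: "lifts n f' f \<Longrightarrow> f' \<in> coord_ring_deg w' d' N' n \<and> f \<in> coord_ring_deg w d N n"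
  unfolding lifts_def coord_ring_deg_def hom_poly_fun_def using hom_poly_lift_poly_red by blast

lemma lifts_ex: "f' \<in> coord_ring_deg w' d' N' n \<Longrightarrow> \<exists>f. lifts n f' f"
  unfolding lifts_def coord_ring_deg_def hom_poly_fun_def by blast

lemma lifts_lift_fun: "f' \<in> coord_ring_deg w' d' N' n \<Longrightarrow> lifts n f' (lift_fun n f')"
  unfolding lift_fun_def using lifts_ex by (metis someI_ex)

lemma lift_fun_eq: "lifts n f' f \<Longrightarrow> lift_fun n f' = f"
  using lifts_lift_fun lifts_unique lifts_deg by blast

definition is_lifted :: "nat list \<Rightarrow> bool" where "is_lifted I \<longleftrightarrow> (\<exists>J\<in>Iseq d' N'. I = lift_seq p J)"

definition unlift :: "nat list \<Rightarrow> nat list" where "unlift I = (SOME J. J \<in> Iseq d' N' \<and> I = lift_seq p J)"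

lemma unlift_spec: "is_lifted I \<Longrightarrow> unlift I \<in> Iseq d' N' \<and> I = lift_seq p (unlift I)"
  unfolding is_lifted_def unlift_def by (rule someI_ex) blast

lemma lift_seq_unlift: "is_lifted I \<Longrightarrow> lift_seq p (unlift I) = I"
  using unlift_spec by metis

lemma peval_orbit_frame_filter_lifted:
  assumes b: "upper_tri b" and ys: "hom_poly d N n ys"
  shows "peval ys (orbit_frame w d N b) =
    peval (filter (\<lambda>(c, Is). \<forall>I\<in>set Is. is_lifted I) ys) (orbit_frame w d N b)"
  using ys
proof (induction ys)
  case (Cons y ys)
  obtain c Is where y: "y = (c, Is)" by fastforce
  have Is: "\<forall>I\<in>set Is. I \<in> Iseq d N" and ys: "hom_poly d N n ys"
    using Cons.prems y unfolding hom_poly_def by auto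
  have "(\<Prod>I\<leftarrow>Is. pluecker I (orbit_frame w d N b)) = 0" if "\<not> (\<forall>I\<in>set Is. is_lifted I)"
    using that Is pluecker_orbit_frame_unlifted[OF b] unfolding is_lifted_def
    by (fastforce simp: prod_list_zero_iff image_iff)
  then show ?case using Cons.IH[OF ys] y by auto
qed simp

lemma lifts_surj:
  assumes f: "f \<in> coord_ring_deg w d N n" shows "\<exists>f'. lifts n f' f"
proof -
  obtain ys where ys: "hom_poly d N n ys" "f = cone_restr w d N (peval ys)"
    using f unfolding coord_ring_deg_def hom_poly_fun_def by blast
  define K where "K = (\<lambda>(c::complex, Is). \<forall>I\<in>set Is. is_lifted I)"
  define xs where "xs = map (\<lambda>(c, Is). (c, map unlift Is)) (filter K ys)"
  have xs: "hom_poly d' N' n xs" using ys(1) unlift_spec unfolding xs_def hom_poly_def K_def by fastforce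
  have "lift_poly p xs = filter K ys"
    unfolding xs_def lift_poly_def by (induction ys) (auto simp: K_def comp_def map_idI lift_seq_unlift)
  then have "cone_restr w d N (peval ys) = cone_restr w d N (peval (lift_poly p xs))"
    using peval_orbit_frame_filter_lifted[OF borel_upper_tri ys(1)]
    by (intro cone_restr_eqI[OF hom_poly_imp_poly_fun[OF ys(1)] hom_poly_imp_poly_fun[OF hom_poly_lift_poly_red[OF xs]]])
      (auto simp: K_def orbit_frames_eq_image)
  then show ?thesis unfolding lifts_def using xs ys(2) by blast
qed

lemma lift_fun_bij: "bij_betw (lift_fun n) (coord_ring_deg w' d' N' n) (coord_ring_deg w d N n)"
  unfolding bij_betw_def
proof (intro conjI)
  show "inj_on (lift_fun n) (coord_ring_deg w' d' N' n)"
    by (rule inj_onI) (metis lifts_lift_fun lifts_inj)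
  show "lift_fun n ` coord_ring_deg w' d' N' n = coord_ring_deg w d N n"
  proof
    show "lift_fun n ` coord_ring_deg w' d' N' n \<subseteq> coord_ring_deg w d N n" using lifts_lift_fun lifts_deg by blast
    show "coord_ring_deg w d N n \<subseteq> lift_fun n ` coord_ring_deg w' d' N' n"
    proof
      fix f assume "f \<in> coord_ring_deg w d N n"
      then obtain f' where "lifts n f' f" using lifts_surj by blast
      then show "f \<in> lift_fun n ` coord_ring_deg w' d' N' n" using lift_fun_eq lifts_deg by (metis image_eqI)
    qed
  qed
qed

lemma lifts_add: "lifts n f' f \<Longrightarrow> lifts n h' h \<Longrightarrow> lifts n (\<lambda>A. f' A + h' A) (\<lambda>A. f A + h A)"
  unfolding lifts_def
proof (elim exE conjE)
  fix xs ys assume "hom_poly d' N' n xs" "f' = cone_restr w' d' N' (peval xs)" "f = cone_restr w d N (peval (lift_poly p xs))"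
    "hom_poly d' N' n ys" "h' = cone_restr w' d' N' (peval ys)" "h = cone_restr w d N (peval (lift_poly p ys))"
  then show "\<exists>xs. hom_poly d' N' n xs \<and> (\<lambda>A. f' A + h' A) = cone_restr w' d' N' (peval xs) \<and> (\<lambda>A. f A + h A) = cone_restr w d N (peval (lift_poly p xs))"
    by (intro exI[of _ "xs @ ys"]) (auto simp: hom_poly_def cone_restr_def lift_poly_def fun_eq_iff)
qed

lemma lift_poly_smult: "lift_poly p (map (\<lambda>(c, Is). (k * c, Is)) xs) = map (\<lambda>(c, Is). (k * c, Is)) (lift_poly p xs)"
  unfolding lift_poly_def by (induction xs) auto

lemma lifts_smult: "lifts n f' f \<Longrightarrow> lifts n (\<lambda>A. k * f' A) (\<lambda>A. k * f A)"
  unfolding lifts_def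
proof (elim exE conjE)
  fix xs assume "hom_poly d' N' n xs" "f' = cone_restr w' d' N' (peval xs)" "f = cone_restr w d N (peval (lift_poly p xs))"
  then show "\<exists>xs. hom_poly d' N' n xs \<and> (\<lambda>A. k * f' A) = cone_restr w' d' N' (peval xs) \<and> (\<lambda>A. k * f A) = cone_restr w d N (peval (lift_poly p xs))"
    by (intro exI[of _ "map (\<lambda>(c, Is). (k * c, Is)) xs"])
      (auto simp: hom_poly_def cone_restr_def lift_poly_smult peval_smult fun_eq_iff)
qed

lemma lifts_act:
  assumes g: "g \<in> L" and R: "lifts n f' f"
  shows "lifts n (\<lambda>A. top_minor p g ^ n * act w' d' N' (principal_sub p N' g) f' A) (act w d N g f)"
proof -
  let ?g' = "principal_sub p N' g"
  have g': "?g' \<in> L'" unfolding red_L_def using g by blast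
  obtain xs where xs: "hom_poly d' N' n xs" "f' = cone_restr w' d' N' (peval xs)" "f = cone_restr w d N (peval (lift_poly p xs))"
    using R unfolding lifts_def by blast
  obtain zs where zs: "hom_poly d' N' n zs" "(\<lambda>A. peval xs (mmult N' ?g' A)) = peval zs"
    using hom_poly_fun_mmult[of d' N' n "peval xs" ?g'] xs(1) unfolding hom_poly_fun_def by blast
  define zs2 where "zs2 = map (\<lambda>(c, Is). (top_minor p g ^ n * c, Is)) zs"
  have hz2: "hom_poly d' N' n zs2" using zs(1) unfolding zs2_def hom_poly_def by auto
  have e2: "peval zs2 A = top_minor p g ^ n * peval zs A" for A unfolding zs2_def by (rule peval_smult)
  have a1: "act w' d' N' ?g' f' = cone_restr w' d' N' (peval zs)"
    unfolding xs(2) act_cone_restr[OF red_stable g'] zs(2) ..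
  have a2: "act w d N g f = cone_restr w d N (\<lambda>A. peval (lift_poly p xs) (mmult N g A))"
    unfolding xs(3) by (rule act_cone_restr[OF st g])
  have "cone_restr w d N (\<lambda>A. peval (lift_poly p xs) (mmult N g A)) = cone_restr w d N (peval (lift_poly p zs2))"
  proof (rule cone_restr_eqI)
    show "poly_fun d N (\<lambda>A. peval (lift_poly p xs) (mmult N g A))"
      using poly_fun_mmult hom_poly_imp_poly_fun[OF hom_poly_lift_poly_red[OF xs(1)]] by blast
    show "poly_fun d N (peval (lift_poly p zs2))" using hom_poly_imp_poly_fun[OF hom_poly_lift_poly_red[OF hz2]] .
  next
    fix B assume "B \<in> orbit_frames w d N"
    then obtain b where b: "b \<in> borel N" "B = orbit_frame w d N b" unfolding orbit_frames_eq_image by blast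
    let ?B' = "orbit_frame w' d' N' (principal_sub p N' b)"
    have "peval (lift_poly p xs) (mmult N g B) = (top_minor p g * top_minor p b) ^ n * peval xs (mmult N' ?g' ?B')"
      using peval_lift_poly_mmult_orbit_frame[OF st g b(1) xs(1)] b(2) by simp
    also have "\<dots> = (top_minor p g * top_minor p b) ^ n * peval zs ?B'" using zs(2) by metis
    also have "\<dots> = top_minor p b ^ n * peval zs2 ?B'" using e2 by (simp add: power_mult_distrib)
    also have "\<dots> = peval (lift_poly p zs2) B" using peval_lift_poly_orbit_frame[OF b(1) hz2] b(2) by simp
    finally show "peval (lift_poly p xs) (mmult N g B) = peval (lift_poly p zs2) B" .
  qed
  moreover have "(\<lambda>A. top_minor p g ^ n * act w' d' N' ?g' f' A) = cone_restr w' d' N' (peval zs2)"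
    unfolding a1 by (auto simp: cone_restr_def e2 fun_eq_iff)
  ultimately show ?thesis unfolding lifts_def using hz2 a2 by auto
qed

lemma graded_rep_coord_ring: "graded_rep (coord_ring w d N) (act w d N) L (coord_ring_deg w d N) (scalar_mat N) d"
  by (rule coord_ring_graded_rep[OF st scalar_mat_levi]) (use d1 in auto)

lemma scalar_mat_red_L: "t \<noteq> 0 \<Longrightarrow> scalar_mat N' t \<in> L'"
  unfolding red_L_def using scalar_mat_levi principal_sub_scalar_mat by (metis image_eqI)

lemma graded_rep_red_coord_ring: "graded_rep (coord_ring w' d' N') (act w' d' N') L' (coord_ring_deg w' d' N') (scalar_mat N') d'"
  by (rule coord_ring_graded_rep[OF red_stable scalar_mat_red_L red_d_pos])

lemma lift_fun_add: "f \<in> coord_ring_deg w' d' N' n \<Longrightarrow> h \<in> coord_ring_deg w' d' N' n \<Longrightarrow> lift_fun n (\<lambda>A. f A + h A) = (\<lambda>A. lift_fun n f A + lift_fun n h A)"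
  using lift_fun_eq lifts_add lifts_lift_fun by blast

lemma lift_fun_smult: "f \<in> coord_ring_deg w' d' N' n \<Longrightarrow> lift_fun n (\<lambda>A. c * f A) = (\<lambda>A. c * lift_fun n f A)"
  using lift_fun_eq lifts_smult lifts_lift_fun by blast

lemma lift_fun_act:
  assumes g: "g \<in> L" and f: "f \<in> coord_ring_deg w' d' N' n"
  shows "act w d N g (lift_fun n f) = (\<lambda>A. top_minor p g ^ n * lift_fun n (act w' d' N' (principal_sub p N' g) f) A)"
proof -
  have g': "principal_sub p N' g \<in> L'" unfolding red_L_def using g by blast
  have a: "act w' d' N' (principal_sub p N' g) f \<in> coord_ring_deg w' d' N' n" using graded_rep.V_act[OF graded_rep_red_coord_ring g' f] .
  have r1: "lifts n (\<lambda>A. top_minor p g ^ n * act w' d' N' (principal_sub p N' g) f A) (act w d N g (lift_fun n f))"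
    by (rule lifts_act[OF g lifts_lift_fun[OF f]])
  have r2: "lifts n (\<lambda>A. top_minor p g ^ n * act w' d' N' (principal_sub p N' g) f A)
      (\<lambda>A. top_minor p g ^ n * lift_fun n (act w' d' N' (principal_sub p N' g) f) A)"
    by (rule lifts_smult[OF lifts_lift_fun[OF a]])
  show ?thesis using lifts_unique[OF r1 r2] .
qed

lemma graded_transfer_lift_fun:
  "graded_transfer (coord_ring w d N) (act w d N) L (coord_ring_deg w d N) (scalar_mat N) d
     (coord_ring w' d' N') (act w' d' N') L' (coord_ring_deg w' d' N') (scalar_mat N') d'
     (principal_sub p N') (top_minor p) lift_fun"
  by (intro graded_transfer.intro graded_transfer_axioms.intro graded_rep_coord_ring
      graded_rep_red_coord_ring lift_fun_bij lift_fun_add lift_fun_smult lift_fun_act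
      top_minor_levi_nonzero[OF st]) (simp_all add: red_L_def)

lemma mult_free_iff_reduction: "mult_free w d N L \<longleftrightarrow> mult_free w' d' N' L'"
  unfolding mult_free_iff_multiplicity_free using graded_transfer.multiplicity_free_iff[OF graded_transfer_lift_fun] .

end

theorem corollary4p5:
  fixes w :: "nat list" and d N :: nat and js :: "nat list"
  assumes "1 \<le> d" and "d < N"
    and "w \<in> Iseq d N"
    and "levi_data N js"
    and "ls_stable w d N (levi N js)"
    and "w \<noteq> [1..<d+1]"
  shows "mult_free w d N (levi N js) \<longleftrightarrow>
         mult_free (red_w w) (red_d w) (red_N w) (red_L w (levi N js))"
proof -
  interpret stable_levi_reduction w d N js
    by unfold_locales (use assms in auto)
  show ?thesis by (rule mult_free_iff_reduction)
qed

end
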